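(* Let $L>0$, $M>0$, $N>0$ be constants and $p\in L^1[0,L]$. Then the problem $$y^{(4)}(x)-My''(x)+N\int_0^L y(t)\,dt=p(x)\ \ \text{for a.e. } x\in(0,L),\qquad y(0)=y(L)=y''(0)=y''(L)=0,$$ has a unique solution $y\in W^{4,1}[0,L]$, given by $$y(x)=\int_0^L G(x,s)p(s)\,ds-\frac{N\int_0^L G(x,s)\,ds}{1+N\int_0^L\!\int_0^L G(x,s)\,ds\,dx}\int_0^L\!\int_0^L G(x,s)p(s)\,ds\,dx,\qquad x\in[0,L].$$
   Context: $G$ is the function $$G(x,s)=\begin{cases}\dfrac{x(L-s)}{ML}-\dfrac{\sinh(\sqrt M x)\sinh(\sqrt M(L-s))}{M\sqrt M\sinh(\sqrt M L)}, & 0\le x\le s\le L,\\[2mm] \dfrac{s(L-x)}{ML}-\dfrac{\sinh(\sqrt M s)\sinh(\sqrt M(L-x))}{M\sqrt M\sinh(\sqrt M L)}, & 0\le s\le x\le L.\end{cases}$$ *)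

theory Defs
  imports "HOL-Analysis.Analysis"
begin

definition G :: "real \<Rightarrow> real \<Rightarrow> real \<Rightarrow> real \<Rightarrow> real" where
  "G L M x s =
    (if x \<le> s then
       x * (L - s) / (M * L)
       - sinh (sqrt M * x) * sinh (sqrt M * (L - s)) / (M * sqrt M * sinh (sqrt M * L))
     else
       s * (L - x) / (M * L)
       - sinh (sqrt M * s) * sinh (sqrt M * (L - x)) / (M * sqrt M * sinh (sqrt M * L)))"

definition abs_cont_on :: "real set \<Rightarrow> (real \<Rightarrow> real) \<Rightarrow> bool" where
  "abs_cont_on S f \<longleftrightarrow>
    (\<forall>\<epsilon>>0. \<exists>\<delta>>0. \<forall>(n::nat) (a::nat \<Rightarrow> real) (b::nat \<Rightarrow> real).
       (\<forall>i<n. a i \<in> S \<and> b i \<in> S \<and> a i \<le> b i) \<and>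
       (\<forall>i<n. \<forall>j<n. i \<noteq> j \<longrightarrow> b i \<le> a j \<or> b j \<le> a i) \<and>
       (\<Sum>i<n. b i - a i) < \<delta>
       \<longrightarrow> (\<Sum>i<n. \<bar>f (b i) - f (a i)\<bar>) < \<epsilon>)"

text \<open>y is a W^{4,1}[0,L] solution of the boundary value problem:
  y, y', y'' are differentiable on [0,L] (one-sided at the endpoints) with derivatives
  y1, y2, y3, the third derivative y3 is absolutely continuous on [0,L],
  and for a.e. x in (0,L) the fourth derivative y3'(x) exists and satisfies the equation.\<close>
definition bvp_solution ::
  "real \<Rightarrow> real \<Rightarrow> real \<Rightarrow> (real \<Rightarrow> real) \<Rightarrow> (real \<Rightarrow> real) \<Rightarrow> bool" where
  "bvp_solution L M N p y \<longleftrightarrow>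
    (\<exists>y1 y2 y3.
       (\<forall>x\<in>{0..L}. (y has_real_derivative y1 x) (at x within {0..L})) \<and>
       (\<forall>x\<in>{0..L}. (y1 has_real_derivative y2 x) (at x within {0..L})) \<and>
       (\<forall>x\<in>{0..L}. (y2 has_real_derivative y3 x) (at x within {0..L})) \<and>
       abs_cont_on {0..L} y3 \<and>
       (AE x in lebesgue. x \<in> {0<..<L} \<longrightarrow>
          (\<exists>y4. (y3 has_real_derivative y4) (at x) \<and>
                y4 - M * y2 x + N * (LINT t:{0..L}|lebesgue. y t) = p x)) \<and>
       y 0 = 0 \<and> y L = 0 \<and> y2 0 = 0 \<and> y2 L = 0)"

end

theory Submission
  imports Defs
begin

text \<open>
  Write \<open>a = sqrt M\<close> and let \<open>\<Phi> t = (sinh (a t) / a - t) / M\<close> be the fundamental solution of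
  \<open>y'''' - M y'' = 0\<close>, i.e. \<open>\<Phi> = \<Phi>' = \<Phi>'' = 0\<close> and \<open>\<Phi>''' = 1\<close> at \<open>0\<close>. The Green function is
  \<open>\<Phi> (x - s)\<close> for \<open>s < x\<close> (and \<open>0\<close> otherwise) minus the solution of the homogeneous equation
  with the boundary values of \<open>\<Phi> (x - s)\<close>, so \<open>U\<^sub>p x = \<integral> G x s p s ds\<close> is the causal convolution
  \<open>\<integral>\<^sub>0\<^sup>x \<Phi> (x - s) p s ds\<close> plus a homogeneous solution. The addition theorems turn this
  convolution into a combination of smooth functions times indefinite integrals of \<open>p\<close>, so the
  Lebesgue differentiation theorem and the fundamental theorem of calculus for absolutely
  continuous functions show that \<open>U\<^sub>p\<close> solves \<open>y'''' - M y'' = p\<close> with the boundary conditions.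

  The nonlocal problem is then solved by \<open>U\<^sub>p - k U\<^sub>1\<close>, where \<open>k = N \<integral> (U\<^sub>p - k U\<^sub>1)\<close> is
  solvable because \<open>\<integral> U\<^sub>1 \<ge> 0\<close>. This inequality and uniqueness both come from the energy identity
  \<open>\<integral> y (y'''' - M y'') = \<integral> (y'')\<^sup>2 + M (y')\<^sup>2\<close> under the boundary conditions: the difference \<open>z\<close>
  of two solutions has \<open>z'''' - M z'' = - N \<integral> z\<close>, so the energy equals \<open>- N (\<integral> z)\<^sup>2 \<le> 0\<close>,
  which forces \<open>z' = 0\<close> and hence \<open>z = 0\<close>.
\<close>

section \<open>Absolutely continuous functions\<close>

definition nonoverlapping_intervals :: "real set \<Rightarrow> nat \<Rightarrow> (nat \<Rightarrow> real) \<Rightarrow> (nat \<Rightarrow> real) \<Rightarrow> bool"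
  where "nonoverlapping_intervals S n \<alpha> \<beta> \<longleftrightarrow>
    (\<forall>i<n. \<alpha> i \<in> S \<and> \<beta> i \<in> S \<and> \<alpha> i \<le> \<beta> i) \<and>
    (\<forall>i<n. \<forall>j<n. i \<noteq> j \<longrightarrow> \<beta> i \<le> \<alpha> j \<or> \<beta> j \<le> \<alpha> i)"

lemma abs_cont_on_iff:
  "abs_cont_on S f \<longleftrightarrow> (\<forall>\<epsilon>>0. \<exists>\<delta>>0. \<forall>n \<alpha> \<beta>. nonoverlapping_intervals S n \<alpha> \<beta> \<longrightarrow>
     (\<Sum>i<n. \<beta> i - \<alpha> i) < \<delta> \<longrightarrow> (\<Sum>i<n. \<bar>f (\<beta> i) - f (\<alpha> i)\<bar>) < \<epsilon>)"
  unfolding abs_cont_on_def nonoverlapping_intervals_def by (simp only: imp_conjL)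

lemma abs_cont_onI:
  assumes "\<And>\<epsilon>. \<epsilon> > 0 \<Longrightarrow> \<exists>\<delta>>0. \<forall>n \<alpha> \<beta>. nonoverlapping_intervals S n \<alpha> \<beta> \<longrightarrow>
     (\<Sum>i<n. \<beta> i - \<alpha> i) < \<delta> \<longrightarrow> (\<Sum>i<n. \<bar>f (\<beta> i) - f (\<alpha> i)\<bar>) < \<epsilon>"
  shows "abs_cont_on S f"
  using assms unfolding abs_cont_on_iff by blast

lemma abs_cont_onE:
  assumes "abs_cont_on S f" and "\<epsilon> > 0"
  obtains \<delta> where "\<delta> > 0" and "\<And>n \<alpha> \<beta>. nonoverlapping_intervals S n \<alpha> \<beta> \<Longrightarrow>
     (\<Sum>i<n. \<beta> i - \<alpha> i) < \<delta> \<Longrightarrow> (\<Sum>i<n. \<bar>f (\<beta> i) - f (\<alpha> i)\<bar>) < \<epsilon>"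
  using assms unfolding abs_cont_on_iff by blast

lemma nonoverlapping_intervalsD:
  assumes "nonoverlapping_intervals S n \<alpha> \<beta>" and "i < n"
  shows "\<alpha> i \<in> S" "\<beta> i \<in> S" "\<alpha> i \<le> \<beta> i"
  using assms unfolding nonoverlapping_intervals_def by auto

lemma nonoverlapping_intervals_mono:
  "nonoverlapping_intervals S n \<alpha> \<beta> \<Longrightarrow> S \<subseteq> T \<Longrightarrow> nonoverlapping_intervals T n \<alpha> \<beta>"
  unfolding nonoverlapping_intervals_def by blast

lemma abs_cont_on_subset:
  assumes "abs_cont_on T f" and "S \<subseteq> T"
  shows "abs_cont_on S f"
proof (rule abs_cont_onI)
  fix \<epsilon> :: real assume "\<epsilon> > 0"
  obtain \<delta> where "\<delta> > 0" and "\<And>n \<alpha> \<beta>. nonoverlapping_intervals T n \<alpha> \<beta> \<Longrightarrow>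
     (\<Sum>i<n. \<beta> i - \<alpha> i) < \<delta> \<Longrightarrow> (\<Sum>i<n. \<bar>f (\<beta> i) - f (\<alpha> i)\<bar>) < \<epsilon>"
    using abs_cont_onE[OF assms(1) \<open>\<epsilon> > 0\<close>] by blast
  with nonoverlapping_intervals_mono[OF _ assms(2)] show "\<exists>\<delta>>0. \<forall>n \<alpha> \<beta>. nonoverlapping_intervals S n \<alpha> \<beta> \<longrightarrow>
     (\<Sum>i<n. \<beta> i - \<alpha> i) < \<delta> \<longrightarrow> (\<Sum>i<n. \<bar>f (\<beta> i) - f (\<alpha> i)\<bar>) < \<epsilon>"
    by blast
qed

lemma abs_cont_on_const: "abs_cont_on S (\<lambda>x. c)"
  by (rule abs_cont_onI) (rule exI[of _ 1], simp)

lemma abs_cont_on_dominated: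
  assumes f: "abs_cont_on S f" and g: "abs_cont_on S g"
    and dom: "\<And>u v. u \<in> S \<Longrightarrow> v \<in> S \<Longrightarrow> u \<le> v \<Longrightarrow>
      \<bar>h v - h u\<bar> \<le> C * (\<bar>f v - f u\<bar> + \<bar>g v - g u\<bar>)"
  shows "abs_cont_on S h"
proof (rule abs_cont_onI)
  fix \<epsilon> :: real assume "\<epsilon> > 0"
  define C' where "C' = \<bar>C\<bar> + 1"
  have C': "C' > 0" "C \<le> C'" unfolding C'_def by auto
  then have "\<epsilon> / (2 * C') > 0" using \<open>\<epsilon> > 0\<close> by simp
  then obtain \<delta>f where "\<delta>f > 0" and \<delta>f: "\<And>n \<alpha> \<beta>. nonoverlapping_intervals S n \<alpha> \<beta> \<Longrightarrow>
       (\<Sum>i<n. \<beta> i - \<alpha> i) < \<delta>f \<Longrightarrow> (\<Sum>i<n. \<bar>f (\<beta> i) - f (\<alpha> i)\<bar>) < \<epsilon> / (2 * C')"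
    using abs_cont_onE[OF f] by blast
  obtain \<delta>g where "\<delta>g > 0" and \<delta>g: "\<And>n \<alpha> \<beta>. nonoverlapping_intervals S n \<alpha> \<beta> \<Longrightarrow>
       (\<Sum>i<n. \<beta> i - \<alpha> i) < \<delta>g \<Longrightarrow> (\<Sum>i<n. \<bar>g (\<beta> i) - g (\<alpha> i)\<bar>) < \<epsilon> / (2 * C')"
    using abs_cont_onE[OF g \<open>\<epsilon> / (2 * C') > 0\<close>] by blast
  show "\<exists>\<delta>>0. \<forall>n \<alpha> \<beta>. nonoverlapping_intervals S n \<alpha> \<beta> \<longrightarrow>
     (\<Sum>i<n. \<beta> i - \<alpha> i) < \<delta> \<longrightarrow> (\<Sum>i<n. \<bar>h (\<beta> i) - h (\<alpha> i)\<bar>) < \<epsilon>"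
  proof (intro exI[of _ "min \<delta>f \<delta>g"] conjI allI impI)
    fix n \<alpha> \<beta> assume I: "nonoverlapping_intervals S n \<alpha> \<beta>"
      and small: "(\<Sum>i<n. \<beta> i - \<alpha> i) < min \<delta>f \<delta>g"
    have "(\<Sum>i<n. \<bar>h (\<beta> i) - h (\<alpha> i)\<bar>)
        \<le> (\<Sum>i<n. C' * (\<bar>f (\<beta> i) - f (\<alpha> i)\<bar> + \<bar>g (\<beta> i) - g (\<alpha> i)\<bar>))"
    proof (rule sum_mono)
      fix i assume "i \<in> {..<n}"
      then have "\<bar>h (\<beta> i) - h (\<alpha> i)\<bar> \<le> C * (\<bar>f (\<beta> i) - f (\<alpha> i)\<bar> + \<bar>g (\<beta> i) - g (\<alpha> i)\<bar>)"
        using nonoverlapping_intervalsD[OF I] by (intro dom) auto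
      also have "\<dots> \<le> C' * (\<bar>f (\<beta> i) - f (\<alpha> i)\<bar> + \<bar>g (\<beta> i) - g (\<alpha> i)\<bar>)"
        using C' by (intro mult_right_mono) auto
      finally show "\<bar>h (\<beta> i) - h (\<alpha> i)\<bar> \<le> \<dots>" .
    qed
    also have "\<dots> = C' * (\<Sum>i<n. \<bar>f (\<beta> i) - f (\<alpha> i)\<bar>) + C' * (\<Sum>i<n. \<bar>g (\<beta> i) - g (\<alpha> i)\<bar>)"
      by (simp add: sum.distrib sum_distrib_left distrib_left)
    also have "\<dots> < C' * (\<epsilon> / (2 * C')) + C' * (\<epsilon> / (2 * C'))"
      using \<delta>f[OF I] \<delta>g[OF I] small C' by (intro add_strict_mono mult_strict_left_mono) auto
    also have "\<dots> = \<epsilon>" using C' by (simp add: field_simps)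
    finally show "(\<Sum>i<n. \<bar>h (\<beta> i) - h (\<alpha> i)\<bar>) < \<epsilon>" .
  qed (use \<open>\<delta>f > 0\<close> \<open>\<delta>g > 0\<close> in auto)
qed

lemma abs_cont_on_add:
  assumes "abs_cont_on S f" and "abs_cont_on S g"
  shows "abs_cont_on S (\<lambda>x. f x + g x)"
  by (rule abs_cont_on_dominated[OF assms, where C = 1]) (simp add: abs_if)

lemma abs_cont_on_diff:
  assumes "abs_cont_on S f" and "abs_cont_on S g"
  shows "abs_cont_on S (\<lambda>x. f x - g x)"
  by (rule abs_cont_on_dominated[OF assms, where C = 1]) (simp add: abs_if)

lemma abs_cont_on_cmult:
  assumes "abs_cont_on S f"
  shows "abs_cont_on S (\<lambda>x. c * f x)"
  by (rule abs_cont_on_dominated[OF assms assms, where C = "\<bar>c\<bar>"])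
    (simp add: abs_mult flip: right_diff_distrib)

lemma abs_cont_on_cong:
  assumes "abs_cont_on S f" and "\<And>x. x \<in> S \<Longrightarrow> f x = g x"
  shows "abs_cont_on S g"
  by (rule abs_cont_on_dominated[OF assms(1) assms(1), where C = 1]) (simp add: assms(2))

lemma abs_cont_on_imp_continuous_on:
  assumes "abs_cont_on S f"
  shows "continuous_on S f"
  unfolding continuous_on_iff
proof (intro ballI allI impI)
  fix x \<epsilon> :: real assume "x \<in> S" "\<epsilon> > 0"
  then obtain \<delta> where "\<delta> > 0" and \<delta>: "\<And>n \<alpha> \<beta>. nonoverlapping_intervals S n \<alpha> \<beta> \<Longrightarrow>
     (\<Sum>i<n. \<beta> i - \<alpha> i) < \<delta> \<Longrightarrow> (\<Sum>i<n. \<bar>f (\<beta> i) - f (\<alpha> i)\<bar>) < \<epsilon>"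
    using abs_cont_onE[OF assms] by blast
  have "dist (f y) (f x) < \<epsilon>" if "y \<in> S" "dist y x < \<delta>" for y
  proof (cases "x \<le> y")
    case True
    then show ?thesis using \<delta>[of 1 "\<lambda>_. x" "\<lambda>_. y"] that \<open>x \<in> S\<close>
      by (simp add: nonoverlapping_intervals_def dist_real_def)
  next
    case False
    then show ?thesis using \<delta>[of 1 "\<lambda>_. y" "\<lambda>_. x"] that \<open>x \<in> S\<close>
      by (simp add: nonoverlapping_intervals_def dist_real_def abs_minus_commute)
  qed
  then show "\<exists>\<delta>>0. \<forall>y\<in>S. dist y x < \<delta> \<longrightarrow> dist (f y) (f x) < \<epsilon>"
    using \<open>\<delta> > 0\<close> by blast
qed

lemma abs_cont_on_mult:
  assumes f: "abs_cont_on {a..b} f" and g: "abs_cont_on {a..b} g"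
  shows "abs_cont_on {a..b} (\<lambda>x. f x * g x)"
proof -
  obtain Bf where Bf: "\<And>x. x \<in> {a..b} \<Longrightarrow> \<bar>f x\<bar> \<le> Bf"
    using continuous_on_compact_bound[OF compact_Icc abs_cont_on_imp_continuous_on[OF f]] by auto
  obtain Bg where Bg: "\<And>x. x \<in> {a..b} \<Longrightarrow> \<bar>g x\<bar> \<le> Bg"
    using continuous_on_compact_bound[OF compact_Icc abs_cont_on_imp_continuous_on[OF g]] by auto
  define B where "B = max Bf Bg"
  have "\<bar>f v * g v - f u * g u\<bar> \<le> B * (\<bar>f v - f u\<bar> + \<bar>g v - g u\<bar>)"
    if "u \<in> {a..b}" "v \<in> {a..b}" for u v
  proof -
    have "f v * g v - f u * g u = g v * (f v - f u) + f u * (g v - g u)"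
      by (simp add: algebra_simps)
    also have "\<bar>\<dots>\<bar> \<le> \<bar>g v\<bar> * \<bar>f v - f u\<bar> + \<bar>f u\<bar> * \<bar>g v - g u\<bar>"
      by (metis abs_mult abs_triangle_ineq)
    also have "\<dots> \<le> B * \<bar>f v - f u\<bar> + B * \<bar>g v - g u\<bar>"
      using Bf[of u] Bg[of v] that unfolding B_def by (intro add_mono mult_right_mono) auto
    finally show ?thesis by (simp add: distrib_left)
  qed
  then show ?thesis by (intro abs_cont_on_dominated[OF f g, where C = B]) auto
qed

lemma sum_integrals_le_integral:
  fixes g :: "real \<Rightarrow> real"
  assumes g: "g integrable_on {a..b}" and g_nonneg: "\<And>x. x \<in> {a..b} \<Longrightarrow> 0 \<le> g x"
    and I: "nonoverlapping_intervals {a..b} n \<alpha> \<beta>"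
  shows "(\<Sum>i<n. integral {\<alpha> i..\<beta> i} g) \<le> integral {a..b} g"
proof -
  have sub: "{\<alpha> i..\<beta> i} \<subseteq> {a..b}" if "i < n" for i
    using nonoverlapping_intervalsD[OF I that] by auto
  have "(g has_integral (\<Sum>i<n. integral {\<alpha> i..\<beta> i} g)) (\<Union>i<n. {\<alpha> i..\<beta> i})"
  proof (rule has_integral_UN)
    show "pairwise (\<lambda>i j. negligible ({\<alpha> i..\<beta> i} \<inter> {\<alpha> j..\<beta> j})) {..<n}"
    proof (intro pairwiseI)
      fix i j assume "i \<in> {..<n}" "j \<in> {..<n}" "i \<noteq> j"
      then have "\<beta> i \<le> \<alpha> j \<or> \<beta> j \<le> \<alpha> i"
        using I unfolding nonoverlapping_intervals_def by auto
      then have "{\<alpha> i..\<beta> i} \<inter> {\<alpha> j..\<beta> j} \<subseteq> {\<beta> i, \<beta> j}" by auto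
      then show "negligible ({\<alpha> i..\<beta> i} \<inter> {\<alpha> j..\<beta> j})"
        by (rule negligible_subset[rotated]) auto
    qed
  qed (use sub integrable_subinterval_real[OF g] in auto)
  moreover have "(\<Union>i<n. {\<alpha> i..\<beta> i}) \<subseteq> {a..b}" using sub by (simp add: UN_subset_iff)
  ultimately show ?thesis
    using g g_nonneg by (metis integral_subset_le integral_unique has_integral_integrable)
qed

lemma integral_truncation_tail_small:
  fixes f :: "real \<Rightarrow> real"
  assumes f: "f absolutely_integrable_on {a..b}" and "\<epsilon> > 0"
  obtains K where "K > 0" and "integral {a..b} (\<lambda>x. \<bar>f x\<bar> - min \<bar>f x\<bar> K) < \<epsilon>"
proof -
  define t where "t K = (\<lambda>x. \<bar>f x\<bar> - min \<bar>f x\<bar> K)" for K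
  have abs_f: "(\<lambda>x. \<bar>f x\<bar>) absolutely_integrable_on {a..b}"
    using f by (simp add: absolutely_integrable_on_def)
  have t: "t K integrable_on {a..b}" for K
    unfolding t_def
    by (intro set_lebesgue_integral_eq_integral(1) set_integral_diff(1) abs_f
        absolutely_integrable_min_1[OF abs_f, of "\<lambda>_. K", simplified])
  have "(\<lambda>k. integral {a..b} (t (real k))) \<longlonglongrightarrow> integral {a..b} (\<lambda>x. 0)"
  proof (rule dominated_convergence(2)[OF t])
    show "(\<lambda>x. \<bar>f x\<bar>) integrable_on {a..b}"
      using abs_f by (simp add: absolutely_integrable_on_def)
    show "norm (t (real k) x) \<le> \<bar>f x\<bar>" for k x
      unfolding t_def by (simp add: min_def)
    show "(\<lambda>k. t (real k) x) \<longlonglongrightarrow> 0" for x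
    proof (rule tendsto_eventually)
      obtain k0 :: nat where "\<bar>f x\<bar> \<le> real k0" using real_arch_simple by blast
      then show "\<forall>\<^sub>F k in sequentially. t (real k) x = 0"
        unfolding t_def eventually_sequentially by (intro exI[of _ k0]) auto
    qed
  qed
  from LIMSEQ_D[OF this \<open>\<epsilon> > 0\<close>] obtain k where "\<forall>m\<ge>k. \<bar>integral {a..b} (t (real m))\<bar> < \<epsilon>"
    by auto
  then have k: "integral {a..b} (t (real k)) < \<epsilon>" by auto
  have "integral {a..b} (t (real k + 1)) \<le> integral {a..b} (t (real k))"
    using t by (intro integral_le) (auto simp: t_def)
  with k show ?thesis
    by (intro that[of "real k + 1"]) (auto simp: t_def)
qed

lemma abs_integral_le_truncation:
  fixes f :: "real \<Rightarrow> real"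
  assumes f: "f absolutely_integrable_on {c..d}" and "c \<le> d"
  shows "\<bar>integral {c..d} f\<bar> \<le> K * (d - c) + integral {c..d} (\<lambda>x. \<bar>f x\<bar> - min \<bar>f x\<bar> K)"
proof -
  have abs_f: "(\<lambda>x. \<bar>f x\<bar>) absolutely_integrable_on {c..d}"
    using f by (simp add: absolutely_integrable_on_def)
  have trunc: "(\<lambda>x. min \<bar>f x\<bar> K) integrable_on {c..d}"
    using absolutely_integrable_min_1[OF abs_f, of "\<lambda>_. K"]
    by (simp add: set_lebesgue_integral_eq_integral(1))
  have tail: "(\<lambda>x. \<bar>f x\<bar> - min \<bar>f x\<bar> K) integrable_on {c..d}"
    using abs_f trunc by (intro integrable_diff) (auto simp: absolutely_integrable_on_def)
  have "norm (integral {c..d} f) \<le> integral {c..d} (\<lambda>x. min \<bar>f x\<bar> K + (\<bar>f x\<bar> - min \<bar>f x\<bar> K))"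
    using f trunc tail
    by (intro integral_norm_bound_integral integrable_add) (auto simp: absolutely_integrable_on_def)
  then have "\<bar>integral {c..d} f\<bar> \<le> integral {c..d} (\<lambda>x. min \<bar>f x\<bar> K + (\<bar>f x\<bar> - min \<bar>f x\<bar> K))"
    by simp
  also have "\<dots> = integral {c..d} (\<lambda>x. min \<bar>f x\<bar> K) + integral {c..d} (\<lambda>x. \<bar>f x\<bar> - min \<bar>f x\<bar> K)"
    using trunc tail by (rule integral_add)
  also have "integral {c..d} (\<lambda>x. min \<bar>f x\<bar> K) \<le> integral {c..d} (\<lambda>x. K)"
    using trunc by (intro integral_le) auto
  finally show ?thesis using \<open>c \<le> d\<close> by (simp add: mult.commute)
qed

lemma abs_cont_on_integral:
  fixes f :: "real \<Rightarrow> real"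
  assumes f: "f absolutely_integrable_on {a..b}"
  shows "abs_cont_on {a..b} (\<lambda>x. integral {a..x} f)"
proof (rule abs_cont_onI)
  fix \<epsilon> :: real assume "\<epsilon> > 0"
  then obtain K where "K > 0" and tail: "integral {a..b} (\<lambda>x. \<bar>f x\<bar> - min \<bar>f x\<bar> K) < \<epsilon> / 2"
    using integral_truncation_tail_small[OF f, of "\<epsilon> / 2"] by auto
  have tail_int: "(\<lambda>x. \<bar>f x\<bar> - min \<bar>f x\<bar> K) integrable_on {a..b}"
    using f by (intro set_lebesgue_integral_eq_integral(1) set_integral_diff(1)
        absolutely_integrable_min_1[of _ _ "\<lambda>_. K", simplified]) (auto simp: absolutely_integrable_on_def)
  show "\<exists>\<delta>>0. \<forall>n \<alpha> \<beta>. nonoverlapping_intervals {a..b} n \<alpha> \<beta> \<longrightarrow> (\<Sum>i<n. \<beta> i - \<alpha> i) < \<delta> \<longrightarrow>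
      (\<Sum>i<n. \<bar>integral {a..\<beta> i} f - integral {a..\<alpha> i} f\<bar>) < \<epsilon>"
  proof (intro exI[of _ "\<epsilon> / (2 * K)"] conjI allI impI)
    fix n \<alpha> \<beta> assume I: "nonoverlapping_intervals {a..b} n \<alpha> \<beta>"
      and small: "(\<Sum>i<n. \<beta> i - \<alpha> i) < \<epsilon> / (2 * K)"
    have piece: "\<bar>integral {a..\<beta> i} f - integral {a..\<alpha> i} f\<bar>
        \<le> K * (\<beta> i - \<alpha> i) + integral {\<alpha> i..\<beta> i} (\<lambda>x. \<bar>f x\<bar> - min \<bar>f x\<bar> K)"
      if "i \<in> {..<n}" for i
    proof -
      have i: "a \<le> \<alpha> i" "\<alpha> i \<le> \<beta> i" "\<beta> i \<le> b"
        using nonoverlapping_intervalsD[OF I] that by auto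
      have "integral {a..\<alpha> i} f + integral {\<alpha> i..\<beta> i} f = integral {a..\<beta> i} f"
        using i by (intro Henstock_Kurzweil_Integration.integral_combine
            integrable_subinterval_real[OF set_lebesgue_integral_eq_integral(1)[OF f]]) auto
      then have "\<bar>integral {a..\<beta> i} f - integral {a..\<alpha> i} f\<bar> = \<bar>integral {\<alpha> i..\<beta> i} f\<bar>"
        by simp
      also have "\<dots> \<le> K * (\<beta> i - \<alpha> i) + integral {\<alpha> i..\<beta> i} (\<lambda>x. \<bar>f x\<bar> - min \<bar>f x\<bar> K)"
        using i by (intro abs_integral_le_truncation absolutely_integrable_on_subinterval[OF f]) auto
      finally show ?thesis .
    qed
    have "(\<Sum>i<n. \<bar>integral {a..\<beta> i} f - integral {a..\<alpha> i} f\<bar>)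
        \<le> (\<Sum>i<n. K * (\<beta> i - \<alpha> i) + integral {\<alpha> i..\<beta> i} (\<lambda>x. \<bar>f x\<bar> - min \<bar>f x\<bar> K))"
      by (rule sum_mono[OF piece])
    also have "\<dots> = K * (\<Sum>i<n. \<beta> i - \<alpha> i) + (\<Sum>i<n. integral {\<alpha> i..\<beta> i} (\<lambda>x. \<bar>f x\<bar> - min \<bar>f x\<bar> K))"
      by (simp add: sum.distrib sum_distrib_left)
    also have "(\<Sum>i<n. integral {\<alpha> i..\<beta> i} (\<lambda>x. \<bar>f x\<bar> - min \<bar>f x\<bar> K))
        \<le> integral {a..b} (\<lambda>x. \<bar>f x\<bar> - min \<bar>f x\<bar> K)"
      by (rule sum_integrals_le_integral[OF tail_int _ I]) simp
    also have "K * (\<Sum>i<n. \<beta> i - \<alpha> i) \<le> \<epsilon> / 2"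
      using small \<open>K > 0\<close> by (simp add: field_simps)
    finally show "(\<Sum>i<n. \<bar>integral {a..\<beta> i} f - integral {a..\<alpha> i} f\<bar>) < \<epsilon>"
      using tail by linarith
  qed (use \<open>\<epsilon> > 0\<close> \<open>K > 0\<close> in simp)
qed

lemma abs_cont_on_C1:
  assumes \<phi>: "\<And>x. x \<in> {a..b} \<Longrightarrow> (\<phi> has_real_derivative \<phi>' x) (at x within {a..b})"
    and \<phi>': "continuous_on {a..b} \<phi>'"
  shows "abs_cont_on {a..b} \<phi>"
proof (rule abs_cont_on_cong)
  show "abs_cont_on {a..b} (\<lambda>x. \<phi> a + integral {a..x} \<phi>')"
    by (intro abs_cont_on_add abs_cont_on_const abs_cont_on_integral
        absolutely_integrable_continuous_real \<phi>')
  fix x assume x: "x \<in> {a..b}"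
  have "(\<phi>' has_integral (\<phi> x - \<phi> a)) {a..x}"
  proof (rule fundamental_theorem_of_calculus)
    show "(\<phi> has_vector_derivative \<phi>' y) (at y within {a..x})" if "y \<in> {a..x}" for y
      using \<phi>[of y] that x
      by (auto simp: has_real_derivative_iff_has_vector_derivative intro: has_vector_derivative_within_subset)
  qed (use x in auto)
  then show "\<phi> a + integral {a..x} \<phi>' = \<phi> x" by (simp add: integral_unique)
qed

section \<open>The fundamental theorem of calculus for absolutely continuous functions\<close>

lemma sum_lengths_le_measure:
  assumes I: "nonoverlapping_intervals S n \<alpha> \<beta>"
    and sub: "\<And>i. i < n \<Longrightarrow> {\<alpha> i..\<beta> i} \<subseteq> T" and T: "T \<in> lmeasurable"
  shows "(\<Sum>i<n. \<beta> i - \<alpha> i) \<le> measure lebesgue T"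
proof -
  have "(\<Sum>i<n. \<beta> i - \<alpha> i) = (\<Sum>i<n. measure lebesgue {\<alpha> i<..\<beta> i})"
    using nonoverlapping_intervalsD(3)[OF I] by (intro sum.cong) auto
  also have "\<dots> = measure lebesgue (\<Union>i<n. {\<alpha> i<..\<beta> i})"
  proof (rule measure_finite_Union[symmetric])
    show "disjoint_family_on (\<lambda>i. {\<alpha> i<..\<beta> i}) {..<n}"
      using I unfolding disjoint_family_on_def nonoverlapping_intervals_def by fastforce
  qed (use nonoverlapping_intervalsD(3)[OF I] in \<open>auto simp: emeasure_lborel_Ioc\<close>)
  also have "\<dots> \<le> measure lebesgue T"
    using sub T by (intro measure_mono_fmeasurable) fastforce+
  finally show ?thesis .
qed

lemma negligible_outer_open:
  assumes "negligible N" and "\<delta> > 0"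
  obtains T where "open T" "N \<subseteq> T" "T \<in> lmeasurable" "measure lebesgue T < \<delta>"
proof -
  obtain T where T: "open T" "N \<subseteq> T" "T - N \<in> lmeasurable" "emeasure lebesgue (T - N) < ennreal \<delta>"
    using sets_lebesgue_outer_open[OF negligible_imp_sets[OF assms(1)] assms(2)] by blast
  have N: "N \<in> lmeasurable" "measure lebesgue N = 0"
    using assms(1) by (auto simp: negligible_imp_measurable negligible_imp_measure0)
  have T_eq: "T = (T - N) \<union> N" using T(2) by auto
  then have "T \<in> lmeasurable" using T(3) N(1) by (metis fmeasurable.Un)
  moreover have "measure lebesgue T \<le> measure lebesgue (T - N) + measure lebesgue N"
    using T_eq T(3) N(1) by (metis measure_Un_le fmeasurable_def mem_Collect_eq)
  moreover have "measure lebesgue (T - N) < \<delta>"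
    using T(3,4) \<open>\<delta> > 0\<close> by (simp add: emeasure_eq_measure2 ennreal_less_iff)
  ultimately show ?thesis using that T(1,2) N(2) by simp
qed

lemma interval_chain_induct:
  fixes a b :: real
  assumes "a \<le> b" and "P a"
    and local: "\<And>s. s \<in> {a..b} \<Longrightarrow> \<exists>d>0. \<forall>y. \<bar>y - s\<bar> < d \<longrightarrow> R (min y s) (max y s)"
    and step: "\<And>x y. a \<le> x \<Longrightarrow> x \<le> y \<Longrightarrow> y \<le> b \<Longrightarrow> P x \<Longrightarrow> R x y \<Longrightarrow> P y"
  shows "P b"
proof -
  define S where "S = {x \<in> {a..b}. P x}"
  have "a \<in> S" and bdd: "bdd_above S"
    using assms(1,2) unfolding S_def by (auto intro: bdd_aboveI[of _ b])
  define s where "s = Sup S"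
  have "a \<le> s" and "s \<le> b"
    unfolding s_def using \<open>a \<in> S\<close> bdd by (auto intro: cSup_upper cSup_least simp: S_def)
  then obtain d where "d > 0" and d: "\<And>y. \<bar>y - s\<bar> < d \<Longrightarrow> R (min y s) (max y s)"
    using local[of s] by auto
  have "P s"
  proof -
    obtain x where "x \<in> S" "s - d < x"
      using less_cSupD[of S "s - d"] \<open>a \<in> S\<close> \<open>d > 0\<close> unfolding s_def by auto
    moreover have "x \<le> s" unfolding s_def using \<open>x \<in> S\<close> bdd by (rule cSup_upper)
    ultimately show "P s"
      using d[of x] \<open>s \<le> b\<close> by (intro step[of x s]) (auto simp: S_def min_def max_def)
  qed
  moreover have "s = b"
  proof (rule ccontr)
    assume "s \<noteq> b"
    define y where "y = min (s + d / 2) b"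
    have y: "s < y" "y \<le> b" "\<bar>y - s\<bar> < d"
      using \<open>s \<noteq> b\<close> \<open>s \<le> b\<close> \<open>d > 0\<close> unfolding y_def by auto
    then have "P y" using \<open>P s\<close> \<open>a \<le> s\<close> d[of y] by (intro step[of s y]) (auto simp: min_def max_def)
    then have "y \<in> S" using y \<open>a \<le> s\<close> unfolding S_def by auto
    then have "y \<le> s" unfolding s_def using bdd by (rule cSup_upper)
    with y show False by simp
  qed
  ultimately show ?thesis by simp
qed

lemma nonoverlapping_intervals_snoc:
  assumes "nonoverlapping_intervals {a..x} n \<alpha> \<beta>" and "a \<le> x" and "x \<le> y"
  shows "nonoverlapping_intervals {a..y} (Suc n) (\<alpha>(n := x)) (\<beta>(n := y))"
  using assms unfolding nonoverlapping_intervals_def by (auto simp: less_Suc_eq)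

lemma zero_derivative_local_bound:
  assumes "(h has_real_derivative 0) (at s)" and "\<epsilon> > 0"
  obtains d where "d > 0" and "\<And>y. \<bar>y - s\<bar> < d \<Longrightarrow> \<bar>h y - h s\<bar> \<le> \<epsilon> * \<bar>y - s\<bar>"
proof -
  have "((\<lambda>y. (h y - h s) / (y - s)) \<longlongrightarrow> 0) (at s)"
    using assms(1) by (simp add: has_field_derivative_iff)
  from LIM_D[OF this assms(2)] obtain d where "d > 0"
    and d: "\<And>y. y \<noteq> s \<and> norm (y - s) < d \<Longrightarrow> norm ((h y - h s) / (y - s) - 0) < \<epsilon>"
    by blast
  have "\<bar>h y - h s\<bar> \<le> \<epsilon> * \<bar>y - s\<bar>" if "\<bar>y - s\<bar> < d" for y
  proof (cases "y = s")
    case False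
    then show ?thesis using d[of y] that by (simp add: abs_divide divide_less_eq)
  qed simp
  with \<open>d > 0\<close> show ?thesis using that by blast
qed

lemma zero_derivative_or_open_local:
  assumes "open T" and "s \<in> T \<or> (h has_real_derivative 0) (at s)" and "\<epsilon> > 0"
  shows "\<exists>d>0. \<forall>y. \<bar>y - s\<bar> < d \<longrightarrow>
    {min y s..max y s} \<subseteq> T \<or> \<bar>h (max y s) - h (min y s)\<bar> \<le> \<epsilon> * (max y s - min y s)"
proof (cases "s \<in> T")
  case True
  then obtain d where "d > 0" "ball s d \<subseteq> T" using \<open>open T\<close> open_contains_ball by blast
  then have "{min y s..max y s} \<subseteq> T" if "\<bar>y - s\<bar> < d" for y
    using that by (auto simp: dist_real_def subset_eq)
  with \<open>d > 0\<close> show ?thesis by blast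
next
  case False
  with assms(2) obtain d where "d > 0" and d: "\<And>y. \<bar>y - s\<bar> < d \<Longrightarrow> \<bar>h y - h s\<bar> \<le> \<epsilon> * \<bar>y - s\<bar>"
    using zero_derivative_local_bound[OF _ \<open>\<epsilon> > 0\<close>] by blast
  have "\<bar>h (max y s) - h (min y s)\<bar> \<le> \<epsilon> * (max y s - min y s)" if "\<bar>y - s\<bar> < d" for y
    using d[OF that] by (cases "y \<le> s") (auto simp: abs_minus_commute)
  with \<open>d > 0\<close> show ?thesis by blast
qed

lemma increment_bound_step:
  assumes I: "nonoverlapping_intervals {a..x} n \<alpha> \<beta>" and IT: "\<forall>i<n. {\<alpha> i..\<beta> i} \<subseteq> T"
    and hx: "\<bar>h x - h a\<bar> \<le> \<epsilon> * (x - a) + (\<Sum>i<n. \<bar>h (\<beta> i) - h (\<alpha> i)\<bar>)"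
    and "a \<le> x" and "x \<le> y" and "0 \<le> \<epsilon>"
    and step: "{x..y} \<subseteq> T \<or> \<bar>h y - h x\<bar> \<le> \<epsilon> * (y - x)"
  shows "\<exists>n \<alpha> \<beta>. nonoverlapping_intervals {a..y} n \<alpha> \<beta> \<and> (\<forall>i<n. {\<alpha> i..\<beta> i} \<subseteq> T) \<and>
    \<bar>h y - h a\<bar> \<le> \<epsilon> * (y - a) + (\<Sum>i<n. \<bar>h (\<beta> i) - h (\<alpha> i)\<bar>)"
proof -
  have tri: "\<bar>h y - h a\<bar> \<le> \<bar>h y - h x\<bar> + \<bar>h x - h a\<bar>" by linarith
  show ?thesis using step
  proof
    assume "{x..y} \<subseteq> T"
    have "(\<Sum>i<Suc n. \<bar>h ((\<beta>(n := y)) i) - h ((\<alpha>(n := x)) i)\<bar>)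
        = (\<Sum>i<n. \<bar>h (\<beta> i) - h (\<alpha> i)\<bar>) + \<bar>h y - h x\<bar>"
      by (simp add: lessThan_Suc)
    moreover have "\<epsilon> * (x - a) \<le> \<epsilon> * (y - a)"
      using \<open>x \<le> y\<close> \<open>0 \<le> \<epsilon>\<close> by (simp add: mult_left_mono)
    ultimately show ?thesis
      using nonoverlapping_intervals_snoc[OF I \<open>a \<le> x\<close> \<open>x \<le> y\<close>] IT \<open>{x..y} \<subseteq> T\<close> tri hx
      by (intro exI[of _ "Suc n"] exI[of _ "\<alpha>(n := x)"] exI[of _ "\<beta>(n := y)"]) (auto simp: less_Suc_eq)
  next
    assume "\<bar>h y - h x\<bar> \<le> \<epsilon> * (y - x)"
    then show ?thesis
      using nonoverlapping_intervals_mono[OF I] IT tri hx \<open>x \<le> y\<close>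
      by (intro exI[of _ n] exI[of _ \<alpha>] exI[of _ \<beta>]) (auto simp: algebra_simps)
  qed
qed

text \<open>Cover the exceptional null set by an open set \<open>T\<close> of small measure and creep from \<open>a\<close>
  to \<open>b\<close>: every step either stays inside \<open>T\<close>, where it is paid for by absolute continuity,
  or changes \<open>h\<close> by at most \<open>\<epsilon>\<close> times its length.\<close>

lemma abs_cont_on_deriv_zero_ae_estimate:
  assumes "a \<le> b" and ac: "abs_cont_on {a..b} h" and "negligible N"
    and deriv: "\<And>x. x \<in> {a<..<b} \<Longrightarrow> x \<notin> N \<Longrightarrow> (h has_real_derivative 0) (at x)"
    and "\<epsilon> > 0"
  shows "\<bar>h b - h a\<bar> \<le> \<epsilon> * (b - a + 1)"
proof -
  obtain \<delta> where "\<delta> > 0" and \<delta>: "\<And>n \<alpha> \<beta>. nonoverlapping_intervals {a..b} n \<alpha> \<beta> \<Longrightarrow>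
      (\<Sum>i<n. \<beta> i - \<alpha> i) < \<delta> \<Longrightarrow> (\<Sum>i<n. \<bar>h (\<beta> i) - h (\<alpha> i)\<bar>) < \<epsilon>"
    using abs_cont_onE[OF ac \<open>\<epsilon> > 0\<close>] by blast
  have "negligible (N \<union> {a, b})" using \<open>negligible N\<close> by simp
  then obtain T where "open T" and NT: "N \<union> {a, b} \<subseteq> T" and "T \<in> lmeasurable"
    and "measure lebesgue T < \<delta>"
    using negligible_outer_open[OF _ \<open>\<delta> > 0\<close>] by blast
  define P where "P x \<longleftrightarrow> (\<exists>n \<alpha> \<beta>. nonoverlapping_intervals {a..x} n \<alpha> \<beta> \<and> (\<forall>i<n. {\<alpha> i..\<beta> i} \<subseteq> T) \<and>
      \<bar>h x - h a\<bar> \<le> \<epsilon> * (x - a) + (\<Sum>i<n. \<bar>h (\<beta> i) - h (\<alpha> i)\<bar>))" for x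
  have "P b"
  proof (rule interval_chain_induct[OF \<open>a \<le> b\<close>])
    show "P a" unfolding P_def by (intro exI[of _ 0]) (auto simp: nonoverlapping_intervals_def)
    show "\<exists>d>0. \<forall>y. \<bar>y - s\<bar> < d \<longrightarrow> {min y s..max y s} \<subseteq> T \<or>
        \<bar>h (max y s) - h (min y s)\<bar> \<le> \<epsilon> * (max y s - min y s)" if "s \<in> {a..b}" for s
      using that NT deriv[of s] \<open>\<epsilon> > 0\<close>
      by (intro zero_derivative_or_open_local[OF \<open>open T\<close>]) (auto simp: less_le)
    show "P y" if "a \<le> x" "x \<le> y" "y \<le> b" "P x" "{x..y} \<subseteq> T \<or> \<bar>h y - h x\<bar> \<le> \<epsilon> * (y - x)" for x y
      using that increment_bound_step[of a x _ _ _ T h \<epsilon> y] \<open>\<epsilon> > 0\<close> unfolding P_def by auto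
  qed
  then obtain n \<alpha> \<beta> where I: "nonoverlapping_intervals {a..b} n \<alpha> \<beta>"
    and IT: "\<forall>i<n. {\<alpha> i..\<beta> i} \<subseteq> T"
    and hb: "\<bar>h b - h a\<bar> \<le> \<epsilon> * (b - a) + (\<Sum>i<n. \<bar>h (\<beta> i) - h (\<alpha> i)\<bar>)"
    unfolding P_def by blast
  have "(\<Sum>i<n. \<beta> i - \<alpha> i) < \<delta>"
    using sum_lengths_le_measure[OF I _ \<open>T \<in> lmeasurable\<close>] IT \<open>measure lebesgue T < \<delta>\<close> by fastforce
  moreover have "\<epsilon> * (b - a + 1) = \<epsilon> * (b - a) + \<epsilon>" by (simp add: algebra_simps)
  ultimately show ?thesis using hb \<delta>[OF I] by linarith
qed

lemma abs_cont_on_deriv_zero_ae_const: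
  assumes "a \<le> b" and ac: "abs_cont_on {a..b} h"
    and deriv: "AE x in lebesgue. x \<in> {a<..<b} \<longrightarrow> (h has_real_derivative 0) (at x)"
  shows "h b = h a"
proof -
  obtain N where "negligible N" and N: "\<And>x. x \<in> {a<..<b} \<Longrightarrow> x \<notin> N \<Longrightarrow> (h has_real_derivative 0) (at x)"
    using deriv unfolding eventually_ae_filter_negligible by blast
  have "\<bar>h b - h a\<bar> \<le> 0 + e" if "e > 0" for e
  proof -
    have "e / (b - a + 1) > 0" using that \<open>a \<le> b\<close> by simp
    then have "\<bar>h b - h a\<bar> \<le> e / (b - a + 1) * (b - a + 1)"
      by (intro abs_cont_on_deriv_zero_ae_estimate[where N = N] N) (simp_all add: \<open>a \<le> b\<close> ac \<open>negligible N\<close>)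
    with \<open>a \<le> b\<close> show ?thesis by simp
  qed
  then have "\<bar>h b - h a\<bar> \<le> 0" by (rule field_le_epsilon)
  then show ?thesis by simp
qed

lemma abs_cont_on_ae_derivative:
  fixes h g :: "real \<Rightarrow> real"
  assumes "a \<le> b" and ac: "abs_cont_on {a..b} h" and g: "continuous_on {a..b} g"
    and deriv: "AE x in lebesgue. x \<in> {a<..<b} \<longrightarrow> (h has_real_derivative g x) (at x)"
    and x: "x \<in> {a..b}"
  shows "(h has_real_derivative g x) (at x within {a..b})"
proof -
  define k where "k = (\<lambda>z. h z - integral {a..z} g)"
  have G: "((\<lambda>u. integral {a..u} g) has_real_derivative g z) (at z)" if "z \<in> {a<..<b}" for z
    using integral_has_real_derivative[OF g, of z] that by (simp add: at_within_Icc_at)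
  have "abs_cont_on {a..b} k"
    unfolding k_def by (intro abs_cont_on_diff ac abs_cont_on_integral absolutely_integrable_continuous_real g)
  have k_deriv: "AE z in lebesgue. z \<in> {a<..<b} \<longrightarrow> (k has_real_derivative 0) (at z)"
    using deriv
  proof eventually_elim
    case (elim z)
    show ?case
    proof
      assume z: "z \<in> {a<..<b}"
      from DERIV_diff[OF elim[rule_format, OF z] G[OF z]]
      show "(k has_real_derivative 0) (at z)" unfolding k_def by simp
    qed
  qed
  have eq: "h y = h a + integral {a..y} g" if y: "y \<in> {a..b}" for y
  proof -
    have "k y = k a"
    proof (rule abs_cont_on_deriv_zero_ae_const[where h = k])
      show "abs_cont_on {a..y} k"
        using abs_cont_on_subset[OF \<open>abs_cont_on {a..b} k\<close>] y by simp
      show "AE z in lebesgue. z \<in> {a<..<y} \<longrightarrow> (k has_real_derivative 0) (at z)"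
        using k_deriv by eventually_elim (use y in auto)
    qed (use y in simp)
    then show ?thesis by (simp add: k_def)
  qed
  have "((\<lambda>y. h a + integral {a..y} g) has_real_derivative 0 + g x) (at x within {a..b})"
    by (intro DERIV_add DERIV_const integral_has_real_derivative[OF g x])
  then show ?thesis unfolding add_0
    by (rule has_field_derivative_transform_within[OF _ zero_less_one x]) (simp add: eq[symmetric])
qed

section \<open>Differentiating indefinite integrals\<close>

lemma lebesgue_points_right:
  fixes q :: "real \<Rightarrow> real"
  assumes q: "\<And>c d. q integrable_on {c..d}"
  obtains N where "negligible N"
    and "\<And>x. x \<notin> N \<Longrightarrow> ((\<lambda>h. integral {x..x + h} q / h) \<longlongrightarrow> q x) (at_right 0)"
proof -
  obtain N where "negligible N" and N: "\<And>x e. x \<notin> N \<Longrightarrow> 0 < e \<Longrightarrow> \<exists>d>0. \<forall>h. 0 < h \<and> h < d \<longrightarrow>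
      norm (integral (cbox x (x + h *\<^sub>R One)) q /\<^sub>R h ^ DIM(real) - q x) < e"
    using integrable_ccontinuous_explicit[of q] q by (metis box_real(2))
  have "((\<lambda>h. integral {x..x + h} q / h) \<longlongrightarrow> q x) (at_right 0)" if x: "x \<notin> N" for x
  proof (rule tendstoI)
    fix e :: real assume "e > 0"
    obtain d where "d > 0" and d: "\<And>h. 0 < h \<Longrightarrow> h < d \<Longrightarrow>
        \<bar>integral {x..x + h} q / h - q x\<bar> < e"
      using N[OF x \<open>e > 0\<close>] by (auto simp: divide_inverse_commute)
    then show "\<forall>\<^sub>F h in at_right 0. dist (integral {x..x + h} q / h) (q x) < e"
      unfolding eventually_at_right_field dist_real_def by (intro exI[of _ d]) auto
  qed
  with \<open>negligible N\<close> show ?thesis using that by blast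
qed

lemma has_real_derivative_from_averages:
  fixes q :: "real \<Rightarrow> real"
  assumes q: "\<And>c d. q integrable_on {c..d}" and "c < x"
    and right: "((\<lambda>h. integral {x..x + h} q / h) \<longlongrightarrow> q x) (at_right 0)"
    and left: "((\<lambda>h. integral {x - h..x} q / h) \<longlongrightarrow> q x) (at_right 0)"
  shows "((\<lambda>u. integral {c..u} q) has_real_derivative q x) (at x)"
proof -
  define F where "F u = integral {c..u} q" for u
  have F_diff: "F v - F u = integral {u..v} q" if "c \<le> u" "u \<le> v" for u v
    using Henstock_Kurzweil_Integration.integral_combine[OF that q] unfolding F_def by simp
  have "((\<lambda>h. (F (h + x) - F x) / (h + x - x)) \<longlongrightarrow> q x) (at_right 0)"
  proof (rule Lim_transform_eventually[OF right])
    show "\<forall>\<^sub>F h in at_right 0. integral {x..x + h} q / h = (F (h + x) - F x) / (h + x - x)"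
      unfolding eventually_at_right_field using \<open>c < x\<close>
      by (intro exI[of _ 1]) (auto simp: F_diff add.commute)
  qed
  then have R: "((\<lambda>u. (F u - F x) / (u - x)) \<longlongrightarrow> q x) (at_right x)"
    by (simp add: filterlim_at_right_to_0[of _ _ x])
  have "((\<lambda>h. (F (- (h + - x)) - F x) / (- (h + - x) - x)) \<longlongrightarrow> q x) (at_right 0)"
  proof (rule Lim_transform_eventually[OF left])
    show "\<forall>\<^sub>F h in at_right 0. integral {x - h..x} q / h = (F (- (h + - x)) - F x) / (- (h + - x) - x)"
      unfolding eventually_at_right_field using \<open>c < x\<close>
      by (intro exI[of _ "x - c"]) (auto simp: F_diff[of "x - _" x] field_simps)
  qed
  then have "((\<lambda>v. (F (- v) - F x) / (- v - x)) \<longlongrightarrow> q x) (at_right (- x))"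
    by (simp add: filterlim_at_right_to_0[of _ _ "- x"])
  then have L: "((\<lambda>u. (F u - F x) / (u - x)) \<longlongrightarrow> q x) (at_left x)"
    unfolding at_left_minus[of x] filterlim_filtermap by simp
  from R L have "((\<lambda>u. (F u - F x) / (u - x)) \<longlongrightarrow> q x) (at x)"
    by (rule filterlim_split_at_real[rotated])
  then show ?thesis unfolding has_field_derivative_iff F_def .
qed

lemma integral_has_real_derivative_ae:
  fixes f :: "real \<Rightarrow> real"
  assumes f: "f integrable_on {a..b}"
  shows "AE x in lebesgue. x \<in> {a<..<b} \<longrightarrow> ((\<lambda>u. integral {a..u} f) has_real_derivative f x) (at x)"
proof -
  define q where "q = (\<lambda>x. if x \<in> {a..b} then f x else 0)"
  have q: "q integrable_on {c..d}" for c d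
    unfolding q_def using integrable_on_subcbox[OF integrable_restrict_UNIV[THEN iffD2, OF f], of c d]
    by simp
  then have q_reflect: "(\<lambda>x. q (- x)) integrable_on {c..d}" for c d
    using Henstock_Kurzweil_Integration.integrable_reflect_real[of q "- c" "- d"] by simp
  obtain N1 where "negligible N1"
    and N1: "\<And>x. x \<notin> N1 \<Longrightarrow> ((\<lambda>h. integral {x..x + h} q / h) \<longlongrightarrow> q x) (at_right 0)"
    using lebesgue_points_right[OF q] by blast
  obtain N2 where "negligible N2"
    and N2: "\<And>x. x \<notin> N2 \<Longrightarrow> ((\<lambda>h. integral {x..x + h} (\<lambda>t. q (- t)) / h) \<longlongrightarrow> q (- x)) (at_right 0)"
    using lebesgue_points_right[OF q_reflect] by blast
  have "negligible (uminus ` N2)"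
    by (rule negligible_differentiable_image_negligible[OF _ \<open>negligible N2\<close>])
      (auto intro!: derivative_intros)
  moreover have "((\<lambda>u. integral {a..u} f) has_real_derivative f x) (at x)"
    if x: "x \<in> {a<..<b}" "x \<notin> N1 \<union> uminus ` N2" for x
  proof -
    have "- x \<notin> N2"
    proof
      assume "- x \<in> N2"
      then have "x \<in> uminus ` N2" by force
      with x(2) show False by simp
    qed
    moreover have "integral {- x..- x + h} (\<lambda>t. q (- t)) = integral {x - h..x} q" for h
      using Henstock_Kurzweil_Integration.integral_reflect_real[of x "x - h" q] by simp
    ultimately have "((\<lambda>h. integral {x - h..x} q / h) \<longlongrightarrow> q x) (at_right 0)"
      using N2[of "- x"] by simp
    then have "((\<lambda>u. integral {a..u} q) has_real_derivative q x) (at x)"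
      using x by (intro has_real_derivative_from_averages[OF q _ N1]) auto
    then have "((\<lambda>u. integral {a..u} f) has_real_derivative q x) (at x)"
    proof (rule has_field_derivative_transform_within_open[OF _ open_greaterThanLessThan x(1)])
      show "integral {a..u} q = integral {a..u} f" if "u \<in> {a<..<b}" for u
        using that by (intro integral_cong) (simp add: q_def)
    qed
    moreover have "q x = f x" using x by (simp add: q_def)
    ultimately show ?thesis by simp
  qed
  ultimately show ?thesis
    unfolding eventually_ae_filter_negligible using \<open>negligible N1\<close>
    by (intro exI[of _ "N1 \<union> uminus ` N2"] conjI negligible_Un) blast+
qed

section \<open>Convolution with hyperbolic kernels\<close>

text \<open>For \<open>a \<noteq> 0\<close> these are exactly the solutions of \<open>y'''' = a\<^sup>2 y''\<close>.\<close>

definition lin_sinh_cosh :: "real \<Rightarrow> real \<Rightarrow> real \<Rightarrow> real \<Rightarrow> real \<Rightarrow> real \<Rightarrow> real"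
  where "lin_sinh_cosh a A B C D t = A + B * t + C * sinh (a * t) + D * cosh (a * t)"

definition causal_conv :: "(real \<Rightarrow> real) \<Rightarrow> (real \<Rightarrow> real) \<Rightarrow> real \<Rightarrow> real"
  where "causal_conv k p x = integral {0..x} (\<lambda>s. k (x - s) * p s)"

lemma lin_sinh_cosh_has_real_derivative:
  "(lin_sinh_cosh a A B C D has_real_derivative lin_sinh_cosh a B 0 (a * D) (a * C) t) (at t)"
  unfolding lin_sinh_cosh_def by (auto intro!: derivative_eq_intros simp: algebra_simps)

lemma continuous_on_lin_sinh_cosh [continuous_intros]:
  "continuous_on S (\<lambda>t. lin_sinh_cosh a A B C D (f t))" if "continuous_on S f"
  unfolding lin_sinh_cosh_def by (intro continuous_intros that)

lemma abs_cont_on_lin_sinh_cosh: "abs_cont_on {c..d} (lin_sinh_cosh a A B C D)"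
  by (rule abs_cont_on_C1[OF has_field_derivative_at_within[OF lin_sinh_cosh_has_real_derivative]])
    (intro continuous_intros)

lemma lin_sinh_cosh_diff:
  "lin_sinh_cosh a A B C D (x - s) =
     (A + B * x) - B * s + (C * sinh (a * x) + D * cosh (a * x)) * cosh (a * s)
     - (C * cosh (a * x) + D * sinh (a * x)) * sinh (a * s)"
  unfolding lin_sinh_cosh_def right_diff_distrib sinh_diff cosh_diff by (simp add: algebra_simps)

lemma absolutely_integrable_continuous_mult:
  fixes \<psi> p :: "real \<Rightarrow> real"
  assumes \<psi>: "continuous_on {a..b} \<psi>" and p: "p absolutely_integrable_on {a..b}"
  shows "(\<lambda>s. \<psi> s * p s) absolutely_integrable_on {a..b}"
proof (rule absolutely_integrable_bounded_measurable_product_real[OF _ _ _ p])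
  show "\<psi> \<in> borel_measurable (lebesgue_on {a..b})"
    by (rule continuous_imp_measurable_on_sets_lebesgue[OF \<psi>]) auto
  show "bounded (\<psi> ` {a..b})"
    by (rule compact_imp_bounded, rule compact_continuous_image[OF \<psi>]) auto
qed auto

lemma integrable_continuous_mult:
  fixes \<psi> p :: "real \<Rightarrow> real"
  assumes "continuous_on {a..b} \<psi>" and "p absolutely_integrable_on {a..b}"
  shows "(\<lambda>s. \<psi> s * p s) integrable_on {a..b}"
  using absolutely_integrable_continuous_mult[OF assms] by (rule set_lebesgue_integral_eq_integral(1))

lemma causal_conv_0 [simp]: "causal_conv k p 0 = 0"
  by (simp add: causal_conv_def)

lemma causal_conv_lin_sinh_cosh_scale:
  "causal_conv (lin_sinh_cosh a (c * A) (c * B) (c * C) (c * D)) p x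
    = c * causal_conv (lin_sinh_cosh a A B C D) p x"
proof -
  have "(\<lambda>s. lin_sinh_cosh a (c * A) (c * B) (c * C) (c * D) (x - s) * p s)
      = (\<lambda>s. c * (lin_sinh_cosh a A B C D (x - s) * p s))"
    by (simp add: fun_eq_iff lin_sinh_cosh_def algebra_simps)
  then show ?thesis unfolding causal_conv_def by simp
qed

lemma causal_conv_lin_sinh_cosh_eq:
  assumes p: "p absolutely_integrable_on {0..x}"
  shows "causal_conv (lin_sinh_cosh a A B C D) p x =
     (A + B * x) * integral {0..x} p - B * integral {0..x} (\<lambda>s. s * p s)
     + (C * sinh (a * x) + D * cosh (a * x)) * integral {0..x} (\<lambda>s. cosh (a * s) * p s)
     - (C * cosh (a * x) + D * sinh (a * x)) * integral {0..x} (\<lambda>s. sinh (a * s) * p s)"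
proof -
  have int: "(\<lambda>s. \<psi> s * p s) integrable_on {0..x}" if "continuous_on {0..x} \<psi>" for \<psi>
    using integrable_continuous_mult[OF that p] .
  have "p integrable_on {0..x}" using int[of "\<lambda>_. 1"] by simp
  moreover have "(\<lambda>s. s * p s) integrable_on {0..x}" "(\<lambda>s. cosh (a * s) * p s) integrable_on {0..x}"
    "(\<lambda>s. sinh (a * s) * p s) integrable_on {0..x}"
    by (intro int continuous_intros)+
  moreover have "(\<lambda>s. lin_sinh_cosh a A B C D (x - s) * p s) = (\<lambda>s.
      (A + B * x) * p s - B * (s * p s)
      + (C * sinh (a * x) + D * cosh (a * x)) * (cosh (a * s) * p s)
      - (C * cosh (a * x) + D * sinh (a * x)) * (sinh (a * s) * p s))"
    by (simp add: fun_eq_iff lin_sinh_cosh_diff algebra_simps)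
  ultimately show ?thesis
    unfolding causal_conv_def
    by (simp add: integral_add integral_diff integrable_add integrable_diff integrable_on_mult_right)
qed

lemma weighted_primitive_mult:
  fixes \<alpha> \<alpha>' \<psi> p :: "real \<Rightarrow> real"
  assumes p: "p absolutely_integrable_on {a..b}" and \<psi>: "continuous_on {a..b} \<psi>"
    and \<alpha>: "\<And>x. (\<alpha> has_real_derivative \<alpha>' x) (at x)" and \<alpha>': "continuous_on {a..b} \<alpha>'"
  shows "abs_cont_on {a..b} (\<lambda>x. \<alpha> x * integral {a..x} (\<lambda>s. \<psi> s * p s))"
    and "AE x in lebesgue. x \<in> {a<..<b} \<longrightarrow> ((\<lambda>x. \<alpha> x * integral {a..x} (\<lambda>s. \<psi> s * p s))
           has_real_derivative \<alpha>' x * integral {a..x} (\<lambda>s. \<psi> s * p s) + \<alpha> x * (\<psi> x * p x)) (at x)"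
proof -
  have "abs_cont_on {a..b} \<alpha>"
    by (rule abs_cont_on_C1[OF has_field_derivative_at_within[OF \<alpha>] \<alpha>'])
  moreover have "abs_cont_on {a..b} (\<lambda>x. integral {a..x} (\<lambda>s. \<psi> s * p s))"
    by (rule abs_cont_on_integral[OF absolutely_integrable_continuous_mult[OF \<psi> p]])
  ultimately show "abs_cont_on {a..b} (\<lambda>x. \<alpha> x * integral {a..x} (\<lambda>s. \<psi> s * p s))"
    by (rule abs_cont_on_mult)
  show "AE x in lebesgue. x \<in> {a<..<b} \<longrightarrow> ((\<lambda>x. \<alpha> x * integral {a..x} (\<lambda>s. \<psi> s * p s))
      has_real_derivative \<alpha>' x * integral {a..x} (\<lambda>s. \<psi> s * p s) + \<alpha> x * (\<psi> x * p x)) (at x)"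
    using integral_has_real_derivative_ae[OF integrable_continuous_mult[OF \<psi> p]]
  proof eventually_elim
    case (elim x)
    show ?case
    proof
      assume "x \<in> {a<..<b}"
      with elim show "((\<lambda>x. \<alpha> x * integral {a..x} (\<lambda>s. \<psi> s * p s)) has_real_derivative
          \<alpha>' x * integral {a..x} (\<lambda>s. \<psi> s * p s) + \<alpha> x * (\<psi> x * p x)) (at x)"
        by (auto intro: DERIV_cong[OF DERIV_mult[OF \<alpha>]])
    qed
  qed
qed

text \<open>After the addition theorems the convolution is a sum of smooth functions times indefinite
  integrals of \<open>p\<close>; differentiating the upper limits produces the extra term
  \<open>k 0 * p x = (A + D) * p x\<close>.\<close>

lemma causal_conv_lin_sinh_cosh:
  fixes p :: "real \<Rightarrow> real"
  assumes p: "p absolutely_integrable_on {0..L}"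
  shows abs_cont_on_causal_conv: "abs_cont_on {0..L} (causal_conv (lin_sinh_cosh a A B C D) p)"
    and causal_conv_ae_derivative: "AE x in lebesgue. x \<in> {0<..<L} \<longrightarrow>
      (causal_conv (lin_sinh_cosh a A B C D) p has_real_derivative
         causal_conv (lin_sinh_cosh a B 0 (a * D) (a * C)) p x + (A + D) * p x) (at x)"
proof -
  define J where "J \<psi> x = integral {0..x} (\<lambda>s. \<psi> s * p s)" for \<psi> :: "real \<Rightarrow> real" and x
  define \<alpha>3 where "\<alpha>3 x = C * sinh (a * x) + D * cosh (a * x)" for x
  define \<alpha>4 where "\<alpha>4 x = C * cosh (a * x) + D * sinh (a * x)" for x
  define F where "F x = (A + B * x) * J (\<lambda>_. 1) x - B * J (\<lambda>s. s) x
    + \<alpha>3 x * J (\<lambda>s. cosh (a * s)) x - \<alpha>4 x * J (\<lambda>s. sinh (a * s)) x" for x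
  have conv_eq: "causal_conv (lin_sinh_cosh a A' B' C' D') p x =
     (A' + B' * x) * J (\<lambda>_. 1) x - B' * J (\<lambda>s. s) x
     + (C' * sinh (a * x) + D' * cosh (a * x)) * J (\<lambda>s. cosh (a * s)) x
     - (C' * cosh (a * x) + D' * sinh (a * x)) * J (\<lambda>s. sinh (a * s)) x"
    if "x \<in> {0..L}" for A' B' C' D' x
    using causal_conv_lin_sinh_cosh_eq[OF absolutely_integrable_on_subinterval[OF p]] that
    unfolding J_def by simp
  have d3: "(\<alpha>3 has_real_derivative a * C * cosh (a * x) + a * D * sinh (a * x)) (at x)" for x
    unfolding \<alpha>3_def by (auto intro!: derivative_eq_intros)
  have d4: "(\<alpha>4 has_real_derivative a * C * sinh (a * x) + a * D * cosh (a * x)) (at x)" for x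
    unfolding \<alpha>4_def by (auto intro!: derivative_eq_intros)
  have cont: "continuous_on {0..L} (\<lambda>_. c)" "continuous_on {0..L} (\<lambda>s. s)"
    "continuous_on {0..L} (\<lambda>s. cosh (a * s))" "continuous_on {0..L} (\<lambda>s. sinh (a * s))"
    "continuous_on {0..L} (\<lambda>x. a * C * cosh (a * x) + a * D * sinh (a * x))"
    "continuous_on {0..L} (\<lambda>x. a * C * sinh (a * x) + a * D * cosh (a * x))" for c
    by (intro continuous_intros)+
  have d1: "((\<lambda>x. A + B * x) has_real_derivative B) (at x)" for x
    by (auto intro!: derivative_eq_intros)
  note W1 = weighted_primitive_mult[OF p cont(1)[of 1] d1 cont(1)[of B], folded J_def]
  note W2 = weighted_primitive_mult[OF p cont(2) DERIV_const[of B] cont(1)[of 0], folded J_def]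
  note W3 = weighted_primitive_mult[OF p cont(3) d3 cont(5), folded J_def]
  note W4 = weighted_primitive_mult[OF p cont(4) d4 cont(6), folded J_def]
  have "abs_cont_on {0..L} F"
    unfolding F_def by (intro abs_cont_on_add abs_cont_on_diff W1(1) W2(1) W3(1) W4(1))
  then show "abs_cont_on {0..L} (causal_conv (lin_sinh_cosh a A B C D) p)"
    by (rule abs_cont_on_cong) (simp add: conv_eq F_def \<alpha>3_def \<alpha>4_def)
  have pyth: "\<alpha>3 x * (cosh (a * x) * c) - \<alpha>4 x * (sinh (a * x) * c) = D * c" for x c
  proof -
    have "\<alpha>3 x * (cosh (a * x) * c) - \<alpha>4 x * (sinh (a * x) * c) = D * c * (cosh (a * x) ^ 2 - sinh (a * x) ^ 2)"
      unfolding \<alpha>3_def \<alpha>4_def power2_eq_square by (simp add: algebra_simps)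
    then show ?thesis by (simp add: hyperbolic_pythagoras)
  qed
  show "AE x in lebesgue. x \<in> {0<..<L} \<longrightarrow>
      (causal_conv (lin_sinh_cosh a A B C D) p has_real_derivative
         causal_conv (lin_sinh_cosh a B 0 (a * D) (a * C)) p x + (A + D) * p x) (at x)"
    using W1(2) W2(2) W3(2) W4(2)
  proof eventually_elim
    case (elim x)
    show ?case
    proof
      assume x: "x \<in> {0<..<L}"
      have "(F has_real_derivative
          (B * J (\<lambda>_. 1) x + (A + B * x) * (1 * p x)) - (0 * J (\<lambda>s. s) x + B * (x * p x))
          + ((a * C * cosh (a * x) + a * D * sinh (a * x)) * J (\<lambda>s. cosh (a * s)) x + \<alpha>3 x * (cosh (a * x) * p x))
          - ((a * C * sinh (a * x) + a * D * cosh (a * x)) * J (\<lambda>s. sinh (a * s)) x + \<alpha>4 x * (sinh (a * x) * p x)))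
          (at x)"
        unfolding F_def using elim x by (intro DERIV_add DERIV_diff) auto
      then have "(F has_real_derivative
          causal_conv (lin_sinh_cosh a B 0 (a * D) (a * C)) p x + (A + D) * p x) (at x)"
        by (rule DERIV_cong) (use x pyth[of x "p x"] in \<open>simp add: conv_eq algebra_simps\<close>)
      then show "(causal_conv (lin_sinh_cosh a A B C D) p has_real_derivative
          causal_conv (lin_sinh_cosh a B 0 (a * D) (a * C)) p x + (A + D) * p x) (at x)"
        by (rule has_field_derivative_transform_within_open[OF _ open_greaterThanLessThan x])
          (simp add: conv_eq F_def \<alpha>3_def \<alpha>4_def)
    qed
  qed
qed

lemma causal_conv_lin_sinh_cosh_derivative:
  assumes p: "p absolutely_integrable_on {0..L}" and "A + D = 0" and x: "x \<in> {0..L}"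
  shows "(causal_conv (lin_sinh_cosh a A B C D) p has_real_derivative
      causal_conv (lin_sinh_cosh a B 0 (a * D) (a * C)) p x) (at x within {0..L})"
proof (rule abs_cont_on_ae_derivative[OF _ abs_cont_on_causal_conv[OF p] _ _ x])
  show "continuous_on {0..L} (causal_conv (lin_sinh_cosh a B 0 (a * D) (a * C)) p)"
    by (rule abs_cont_on_imp_continuous_on[OF abs_cont_on_causal_conv[OF p]])
  show "AE x in lebesgue. x \<in> {0<..<L} \<longrightarrow> (causal_conv (lin_sinh_cosh a A B C D) p
      has_real_derivative causal_conv (lin_sinh_cosh a B 0 (a * D) (a * C)) p x) (at x)"
    using causal_conv_ae_derivative[OF p, of a A B C D] \<open>A + D = 0\<close> by simp
qed (use x in simp)

lemma causal_conv_add_lin_sinh_cosh_derivative: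
  assumes "p absolutely_integrable_on {0..L}" and "A + D = 0" and "x \<in> {0..L}"
  shows "((\<lambda>x. causal_conv (lin_sinh_cosh a A B C D) p x + lin_sinh_cosh a A' B' C' D' x)
      has_real_derivative causal_conv (lin_sinh_cosh a B 0 (a * D) (a * C)) p x
        + lin_sinh_cosh a B' 0 (a * D') (a * C') x) (at x within {0..L})"
  using causal_conv_lin_sinh_cosh_derivative[OF assms] lin_sinh_cosh_has_real_derivative
  by (intro DERIV_add) (auto intro: has_field_derivative_at_within)

section \<open>The boundary value problem\<close>

definition bvp_solution_derivs ::
  "real \<Rightarrow> real \<Rightarrow> real \<Rightarrow> (real \<Rightarrow> real) \<Rightarrow> (real \<Rightarrow> real) \<Rightarrow> (real \<Rightarrow> real) \<Rightarrow> (real \<Rightarrow> real)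
    \<Rightarrow> (real \<Rightarrow> real) \<Rightarrow> bool"
  where "bvp_solution_derivs L M N p y y1 y2 y3 \<longleftrightarrow>
    (\<forall>x\<in>{0..L}. (y has_real_derivative y1 x) (at x within {0..L})) \<and>
    (\<forall>x\<in>{0..L}. (y1 has_real_derivative y2 x) (at x within {0..L})) \<and>
    (\<forall>x\<in>{0..L}. (y2 has_real_derivative y3 x) (at x within {0..L})) \<and>
    abs_cont_on {0..L} y3 \<and>
    (AE x in lebesgue. x \<in> {0<..<L} \<longrightarrow> (\<exists>y4. (y3 has_real_derivative y4) (at x) \<and>
        y4 - M * y2 x + N * (LINT t:{0..L}|lebesgue. y t) = p x)) \<and>
    y 0 = 0 \<and> y L = 0 \<and> y2 0 = 0 \<and> y2 L = 0"

lemma bvp_solution_iff_derivs: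
  "bvp_solution L M N p y \<longleftrightarrow> (\<exists>y1 y2 y3. bvp_solution_derivs L M N p y y1 y2 y3)"
  unfolding bvp_solution_def bvp_solution_derivs_def by (rule refl)

lemma bvp_solutionE:
  assumes "bvp_solution L M N p y"
  obtains y1 y2 y3 where "bvp_solution_derivs L M N p y y1 y2 y3"
  using assms unfolding bvp_solution_iff_derivs by blast

lemma bvp_solution_derivsD:
  assumes "bvp_solution_derivs L M N p y y1 y2 y3"
  shows "\<forall>x\<in>{0..L}. (y has_real_derivative y1 x) (at x within {0..L})"
    "\<forall>x\<in>{0..L}. (y1 has_real_derivative y2 x) (at x within {0..L})"
    "\<forall>x\<in>{0..L}. (y2 has_real_derivative y3 x) (at x within {0..L})"
    "abs_cont_on {0..L} y3"
    "AE x in lebesgue. x \<in> {0<..<L} \<longrightarrow> (\<exists>y4. (y3 has_real_derivative y4) (at x) \<and>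
        y4 - M * y2 x + N * (LINT t:{0..L}|lebesgue. y t) = p x)"
    "y 0 = 0" "y L = 0" "y2 0 = 0" "y2 L = 0"
  using assms unfolding bvp_solution_derivs_def by blast+

lemma bvp_solutionI:
  assumes "\<forall>x\<in>{0..L}. (y has_real_derivative y1 x) (at x within {0..L})"
    "\<forall>x\<in>{0..L}. (y1 has_real_derivative y2 x) (at x within {0..L})"
    "\<forall>x\<in>{0..L}. (y2 has_real_derivative y3 x) (at x within {0..L})"
    "abs_cont_on {0..L} y3"
    "AE x in lebesgue. x \<in> {0<..<L} \<longrightarrow> (\<exists>y4. (y3 has_real_derivative y4) (at x) \<and>
        y4 - M * y2 x + N * (LINT t:{0..L}|lebesgue. y t) = p x)"
    "y 0 = 0" "y L = 0" "y2 0 = 0" "y2 L = 0"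
  shows "bvp_solution L M N p y"
  unfolding bvp_solution_iff_derivs bvp_solution_derivs_def using assms by blast

lemma bvp_solution_continuous:
  assumes "bvp_solution L M N p y"
  shows "continuous_on {0..L} y"
proof -
  obtain y1 y2 y3 where "bvp_solution_derivs L M N p y y1 y2 y3"
    using assms by (rule bvp_solutionE)
  from bvp_solution_derivsD(1)[OF this] show ?thesis by (auto intro: DERIV_continuous_on)
qed

lemma set_integral_eq_integral_continuous:
  fixes y :: "real \<Rightarrow> real"
  assumes "continuous_on {a..b} y"
  shows "(LINT t:{a..b}|lebesgue. y t) = integral {a..b} y"
  using assms by (intro set_lebesgue_integral_eq_integral(2) absolutely_integrable_continuous_real)

lemma bvp_solution_set_integral:
  assumes "bvp_solution L M N p y"
  shows "(LINT t:{0..L}|lebesgue. y t) = integral {0..L} y"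
  using bvp_solution_continuous[OF assms] by (rule set_integral_eq_integral_continuous)

lemma bvp_solution_cong:
  assumes "bvp_solution L M N p y" and "0 \<le> L" and eq: "\<And>x. x \<in> {0..L} \<Longrightarrow> y x = z x"
  shows "bvp_solution L M N p z"
proof -
  obtain y1 y2 y3 where "bvp_solution_derivs L M N p y y1 y2 y3"
    using assms(1) by (rule bvp_solutionE)
  note y = bvp_solution_derivsD[OF this]
  have I: "(LINT t:{0..L}|lebesgue. y t) = (LINT t:{0..L}|lebesgue. z t)"
    using eq by (intro set_lebesgue_integral_cong) auto
  have "\<forall>x\<in>{0..L}. (z has_real_derivative y1 x) (at x within {0..L})"
    using y(1) eq by (blast intro: has_field_derivative_transform_within[OF _ zero_less_one])
  from bvp_solutionI[OF this y(2-4) y(5)[unfolded I] _ _ y(8-9)]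
  show ?thesis using y(6,7) eq[of 0] eq[of L] \<open>0 \<le> L\<close> by simp
qed

lemma bvp_solution_diff_scaled:
  assumes y: "bvp_solution L M N p y" and w: "bvp_solution L M N q w"
  shows "bvp_solution L M N (\<lambda>x. p x - c * q x) (\<lambda>x. y x - c * w x)"
proof -
  obtain y1 y2 y3 where "bvp_solution_derivs L M N p y y1 y2 y3"
    using assms(1) by (rule bvp_solutionE)
  note y = bvp_solution_derivsD[OF this]
  obtain w1 w2 w3 where "bvp_solution_derivs L M N q w w1 w2 w3"
    using assms(2) by (rule bvp_solutionE)
  note w = bvp_solution_derivsD[OF this]
  have I: "(LINT t:{0..L}|lebesgue. y t - c * w t)
      = (LINT t:{0..L}|lebesgue. y t) - c * (LINT t:{0..L}|lebesgue. w t)"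
    using bvp_solution_continuous[OF assms(1)] bvp_solution_continuous[OF assms(2)]
    by (simp add: set_integral_eq_integral_continuous continuous_intros integral_diff
        integrable_continuous_interval integrable_on_mult_right)
  show ?thesis
  proof (rule bvp_solutionI)
    show "\<forall>x\<in>{0..L}. ((\<lambda>x. y x - c * w x) has_real_derivative y1 x - c * w1 x) (at x within {0..L})"
      using y(1) w(1) by (auto intro!: DERIV_diff DERIV_cmult)
    show "\<forall>x\<in>{0..L}. ((\<lambda>x. y1 x - c * w1 x) has_real_derivative y2 x - c * w2 x) (at x within {0..L})"
      using y(2) w(2) by (auto intro!: DERIV_diff DERIV_cmult)
    show "\<forall>x\<in>{0..L}. ((\<lambda>x. y2 x - c * w2 x) has_real_derivative y3 x - c * w3 x) (at x within {0..L})"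
      using y(3) w(3) by (auto intro!: DERIV_diff DERIV_cmult)
    show "abs_cont_on {0..L} (\<lambda>x. y3 x - c * w3 x)"
      using y(4) w(4) by (intro abs_cont_on_diff abs_cont_on_cmult)
    show "AE x in lebesgue. x \<in> {0<..<L} \<longrightarrow> (\<exists>z4. ((\<lambda>x. y3 x - c * w3 x) has_real_derivative z4) (at x) \<and>
        z4 - M * (y2 x - c * w2 x) + N * (LINT t:{0..L}|lebesgue. y t - c * w t) = p x - c * q x)"
      using y(5) w(5)
    proof eventually_elim
      case (elim x)
      show ?case
      proof
        assume "x \<in> {0<..<L}"
        with elim obtain y4 w4 where "(y3 has_real_derivative y4) (at x)" "(w3 has_real_derivative w4) (at x)"
          and eqs: "y4 - M * y2 x + N * (LINT t:{0..L}|lebesgue. y t) = p x"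
          "w4 - M * w2 x + N * (LINT t:{0..L}|lebesgue. w t) = q x"
          by blast
        moreover have "(y4 - c * w4) - M * (y2 x - c * w2 x) + N * (LINT t:{0..L}|lebesgue. y t - c * w t)
            = (y4 - M * y2 x + N * (LINT t:{0..L}|lebesgue. y t))
              - c * (w4 - M * w2 x + N * (LINT t:{0..L}|lebesgue. w t))"
          unfolding I by (simp add: algebra_simps)
        ultimately show "\<exists>z4. ((\<lambda>x. y3 x - c * w3 x) has_real_derivative z4) (at x) \<and>
            z4 - M * (y2 x - c * w2 x) + N * (LINT t:{0..L}|lebesgue. y t - c * w t) = p x - c * q x"
          by (intro exI[of _ "y4 - c * w4"] conjI DERIV_diff DERIV_cmult) simp_all
      qed
    qed
  qed (use y w in simp_all)
qed

lemma bvp_solution_nonlocal: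
  assumes "bvp_solution L M 0 (\<lambda>x. p x - c) y" and c: "c = N * (LINT t:{0..L}|lebesgue. y t)"
  shows "bvp_solution L M N p y"
proof -
  obtain y1 y2 y3 where "bvp_solution_derivs L M 0 (\<lambda>x. p x - c) y y1 y2 y3"
    using assms(1) by (rule bvp_solutionE)
  note y = bvp_solution_derivsD[OF this]
  show ?thesis
  proof (rule bvp_solutionI[OF y(1-4) _ y(6-9)])
    show "AE x in lebesgue. x \<in> {0<..<L} \<longrightarrow> (\<exists>y4. (y3 has_real_derivative y4) (at x) \<and>
        y4 - M * y2 x + N * (LINT t:{0..L}|lebesgue. y t) = p x)"
      using y(5) by eventually_elim (auto simp: c algebra_simps)
  qed
qed

lemma bvp_solution_strong:
  assumes "bvp_solution L M N q y" and q: "continuous_on {0..L} q" and "0 \<le> L"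
  obtains y1 y2 y3 where
    "\<forall>x\<in>{0..L}. (y has_real_derivative y1 x) (at x within {0..L})"
    "\<forall>x\<in>{0..L}. (y1 has_real_derivative y2 x) (at x within {0..L})"
    "\<forall>x\<in>{0..L}. (y2 has_real_derivative y3 x) (at x within {0..L})"
    "\<forall>x\<in>{0..L}. (y3 has_real_derivative q x + M * y2 x - N * integral {0..L} y) (at x within {0..L})"
    "y 0 = 0" "y L = 0" "y2 0 = 0" "y2 L = 0"
proof -
  obtain y1 y2 y3 where "bvp_solution_derivs L M N q y y1 y2 y3"
    using assms(1) by (rule bvp_solutionE)
  note y = bvp_solution_derivsD[OF this]
  have I: "(LINT t:{0..L}|lebesgue. y t) = integral {0..L} y"
    using DERIV_continuous_on[OF y(1)[rule_format]] by (rule set_integral_eq_integral_continuous)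
  have "(y3 has_real_derivative q x + M * y2 x - N * integral {0..L} y) (at x within {0..L})"
    if "x \<in> {0..L}" for x
  proof (rule abs_cont_on_ae_derivative[OF \<open>0 \<le> L\<close> y(4) _ _ that])
    show "continuous_on {0..L} (\<lambda>x. q x + M * y2 x - N * integral {0..L} y)"
      using q DERIV_continuous_on[OF y(3)[rule_format]] by (intro continuous_intros)
    show "AE x in lebesgue. x \<in> {0<..<L} \<longrightarrow>
        (y3 has_real_derivative q x + M * y2 x - N * integral {0..L} y) (at x)"
      using y(5)
    proof eventually_elim
      case (elim x)
      show ?case
      proof
        assume "x \<in> {0<..<L}"
        with elim obtain y4 where "(y3 has_real_derivative y4) (at x)"
          and "y4 - M * y2 x + N * (LINT t:{0..L}|lebesgue. y t) = q x"
          by blast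
        moreover from this(2) have "y4 = q x + M * y2 x - N * integral {0..L} y"
          unfolding I by linarith
        ultimately show "(y3 has_real_derivative q x + M * y2 x - N * integral {0..L} y) (at x)"
          by simp
      qed
    qed
  qed
  with y that show ?thesis by blast
qed

lemma energy_identity:
  fixes w w1 w2 w3 w4 :: "real \<Rightarrow> real"
  assumes "0 \<le> L"
    and d0: "\<forall>x\<in>{0..L}. (w has_real_derivative w1 x) (at x within {0..L})"
    and d1: "\<forall>x\<in>{0..L}. (w1 has_real_derivative w2 x) (at x within {0..L})"
    and d2: "\<forall>x\<in>{0..L}. (w2 has_real_derivative w3 x) (at x within {0..L})"
    and d3: "\<forall>x\<in>{0..L}. (w3 has_real_derivative w4 x) (at x within {0..L})"
    and "continuous_on {0..L} w4"
    and bc: "w 0 = 0" "w L = 0" "w2 0 = 0" "w2 L = 0"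
  shows "integral {0..L} (\<lambda>x. w x * (w4 x - M * w2 x)) = integral {0..L} (\<lambda>x. (w2 x)\<^sup>2 + M * (w1 x)\<^sup>2)"
proof -
  define \<Phi> where "\<Phi> x = w x * w3 x - w1 x * w2 x - M * (w x * w1 x)" for x
  have "((\<lambda>x. w x * (w4 x - M * w2 x) - ((w2 x)\<^sup>2 + M * (w1 x)\<^sup>2)) has_integral (\<Phi> L - \<Phi> 0)) {0..L}"
  proof (rule fundamental_theorem_of_calculus[OF \<open>0 \<le> L\<close>])
    fix x assume "x \<in> {0..L}"
    then have "(\<Phi> has_real_derivative
        w1 x * w3 x + w4 x * w x - (w2 x * w2 x + w3 x * w1 x) - M * (w1 x * w1 x + w2 x * w x))
        (at x within {0..L})"
      unfolding \<Phi>_def using d0 d1 d2 d3 by (intro DERIV_diff DERIV_mult DERIV_cmult) auto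
    then show "(\<Phi> has_vector_derivative w x * (w4 x - M * w2 x) - ((w2 x)\<^sup>2 + M * (w1 x)\<^sup>2))
        (at x within {0..L})"
      by (simp add: has_real_derivative_iff_has_vector_derivative[symmetric] algebra_simps power2_eq_square)
  qed
  moreover have "\<Phi> L - \<Phi> 0 = 0" unfolding \<Phi>_def using bc by simp
  ultimately have "integral {0..L} (\<lambda>x. w x * (w4 x - M * w2 x) - ((w2 x)\<^sup>2 + M * (w1 x)\<^sup>2)) = 0"
    by (simp add: integral_unique)
  moreover have "continuous_on {0..L} w" "continuous_on {0..L} w1" "continuous_on {0..L} w2"
    using d0 d1 d2 by (auto intro: DERIV_continuous_on)
  then have "integral {0..L} (\<lambda>x. w x * (w4 x - M * w2 x) - ((w2 x)\<^sup>2 + M * (w1 x)\<^sup>2))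
      = integral {0..L} (\<lambda>x. w x * (w4 x - M * w2 x)) - integral {0..L} (\<lambda>x. (w2 x)\<^sup>2 + M * (w1 x)\<^sup>2)"
    using \<open>continuous_on {0..L} w4\<close>
    by (intro integral_diff integrable_continuous_interval continuous_intros)
  ultimately show ?thesis by simp
qed

lemma bvp_solution_energy:
  assumes "bvp_solution L M N q y" and "continuous_on {0..L} q" and "0 \<le> L"
  obtains y1 y2 where "\<forall>x\<in>{0..L}. (y has_real_derivative y1 x) (at x within {0..L})"
    and "continuous_on {0..L} y1" and "continuous_on {0..L} y2"
    and "integral {0..L} (\<lambda>x. y x * (q x - N * integral {0..L} y))
      = integral {0..L} (\<lambda>x. (y2 x)\<^sup>2 + M * (y1 x)\<^sup>2)"
proof -
  obtain y1 y2 y3 where y: "\<forall>x\<in>{0..L}. (y has_real_derivative y1 x) (at x within {0..L})"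
    "\<forall>x\<in>{0..L}. (y1 has_real_derivative y2 x) (at x within {0..L})"
    "\<forall>x\<in>{0..L}. (y2 has_real_derivative y3 x) (at x within {0..L})"
    "\<forall>x\<in>{0..L}. (y3 has_real_derivative q x + M * y2 x - N * integral {0..L} y) (at x within {0..L})"
    "y 0 = 0" "y L = 0" "y2 0 = 0" "y2 L = 0"
    using bvp_solution_strong[OF assms] by blast
  have "continuous_on {0..L} y2" using y(3) by (auto intro: DERIV_continuous_on)
  then have "integral {0..L} (\<lambda>x. y x * ((q x + M * y2 x - N * integral {0..L} y) - M * y2 x))
      = integral {0..L} (\<lambda>x. (y2 x)\<^sup>2 + M * (y1 x)\<^sup>2)"
    using assms(2) by (intro energy_identity[OF \<open>0 \<le> L\<close> y(1-4) _ y(5-8)] continuous_intros)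
  then show ?thesis
    using that[OF y(1) DERIV_continuous_on[OF y(2)[rule_format]] \<open>continuous_on {0..L} y2\<close>] by simp
qed

lemma bvp_solution_integral_nonneg:
  assumes "bvp_solution L M 0 (\<lambda>_. 1) y" and "0 \<le> L" and "0 \<le> M"
  shows "0 \<le> integral {0..L} y"
proof -
  obtain y1 y2 where "continuous_on {0..L} y1" "continuous_on {0..L} y2"
    and energy: "integral {0..L} (\<lambda>x. y x * (1 - 0 * integral {0..L} y))
      = integral {0..L} (\<lambda>x. (y2 x)\<^sup>2 + M * (y1 x)\<^sup>2)"
    using bvp_solution_energy[OF assms(1) continuous_on_const \<open>0 \<le> L\<close>] by blast
  have "0 \<le> integral {0..L} (\<lambda>x. (y2 x)\<^sup>2 + M * (y1 x)\<^sup>2)"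
    using \<open>continuous_on {0..L} y1\<close> \<open>continuous_on {0..L} y2\<close> \<open>0 \<le> M\<close>
    by (intro integral_nonneg integrable_continuous_interval continuous_intros) auto
  then show ?thesis using energy by simp
qed

lemma bvp_solution_homogeneous_zero:
  assumes z: "bvp_solution L M N (\<lambda>_. 0) z"
    and "0 < L" and "0 < M" and "0 \<le> N" and x: "x \<in> {0..L}"
  shows "z x = 0"
proof -
  obtain z1 z2 where dz: "\<forall>x\<in>{0..L}. (z has_real_derivative z1 x) (at x within {0..L})"
    and "continuous_on {0..L} z1" "continuous_on {0..L} z2"
    and energy: "integral {0..L} (\<lambda>x. z x * (0 - N * integral {0..L} z))
      = integral {0..L} (\<lambda>x. (z2 x)\<^sup>2 + M * (z1 x)\<^sup>2)"
    using bvp_solution_energy[OF z continuous_on_const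
        less_imp_le[OF \<open>0 < L\<close>]] by blast
  have cont: "continuous_on {0..L} (\<lambda>x. (z2 x)\<^sup>2 + M * (z1 x)\<^sup>2)"
    using \<open>continuous_on {0..L} z1\<close> \<open>continuous_on {0..L} z2\<close> by (intro continuous_intros)
  have "integral {0..L} (\<lambda>x. (z2 x)\<^sup>2 + M * (z1 x)\<^sup>2) = - N * (integral {0..L} z)\<^sup>2"
    unfolding energy[symmetric] by (simp add: power2_eq_square)
  moreover have "- N * (integral {0..L} z)\<^sup>2 \<le> 0" using \<open>0 \<le> N\<close> by simp
  moreover have "0 \<le> integral {0..L} (\<lambda>x. (z2 x)\<^sup>2 + M * (z1 x)\<^sup>2)"
    using cont \<open>0 < M\<close> by (intro integral_nonneg integrable_continuous_interval) auto
  ultimately have "integral {0..L} (\<lambda>x. (z2 x)\<^sup>2 + M * (z1 x)\<^sup>2) = 0" by linarith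
  then have "\<forall>x\<in>{0..L}. (z2 x)\<^sup>2 + M * (z1 x)\<^sup>2 = 0"
    using integral_eq_0_iff[OF cont \<open>0 < L\<close>] \<open>0 < M\<close> by auto
  then have z1: "z1 x = 0" if "x \<in> {0..L}" for x
  proof -
    have "(z2 x)\<^sup>2 + M * (z1 x)\<^sup>2 = 0" "0 \<le> (z2 x)\<^sup>2" "0 \<le> M * (z1 x)\<^sup>2"
      using that \<open>\<forall>x\<in>{0..L}. (z2 x)\<^sup>2 + M * (z1 x)\<^sup>2 = 0\<close> \<open>0 < M\<close> by auto
    then have "M * (z1 x)\<^sup>2 = 0" by linarith
    with \<open>0 < M\<close> show ?thesis by simp
  qed
  have "\<exists>c. \<forall>x\<in>{0..L}. z x = c"
  proof (rule has_field_derivative_zero_constant)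
    show "(z has_field_derivative 0) (at x within {0..L})" if "x \<in> {0..L}" for x
      using dz z1[OF that] that by fastforce
  qed simp
  then obtain c where c: "\<forall>x\<in>{0..L}. z x = c" by blast
  obtain z1' z2' z3' where "bvp_solution_derivs L M N (\<lambda>_. 0) z z1' z2' z3'"
    using z by (rule bvp_solutionE)
  then have "c = 0" using bvp_solution_derivsD(6) c[rule_format, of 0] \<open>0 < L\<close> by force
  with c x show ?thesis by simp
qed

lemma bvp_solution_unique:
  assumes y: "bvp_solution L M N p y" and Y: "bvp_solution L M N p Y"
    and "0 < L" and "0 < M" and "0 \<le> N" and "x \<in> {0..L}"
  shows "y x = Y x"
proof -
  have "bvp_solution L M N (\<lambda>_. 0) (\<lambda>x. y x - 1 * Y x)"
    using bvp_solution_diff_scaled[OF y Y, of 1] by simp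
  from bvp_solution_homogeneous_zero[OF this assms(3-6)] show ?thesis by simp
qed

lemma bvp_solution_nonlocal_combination:
  assumes U: "bvp_solution L M 0 p U" and V: "bvp_solution L M 0 (\<lambda>_. 1) V"
    and "0 \<le> L" and "0 \<le> M" and "0 \<le> N"
  defines "k \<equiv> N * (LINT x:{0..L}|lebesgue. U x) / (1 + N * (LINT x:{0..L}|lebesgue. V x))"
  shows "bvp_solution L M N p (\<lambda>x. U x - k * V x)"
proof -
  have Y: "bvp_solution L M 0 (\<lambda>x. p x - k * 1) (\<lambda>x. U x - k * V x)"
    by (rule bvp_solution_diff_scaled[OF U V])
  have "0 \<le> (LINT x:{0..L}|lebesgue. V x)"
    using bvp_solution_integral_nonneg[OF V \<open>0 \<le> L\<close> \<open>0 \<le> M\<close>] bvp_solution_set_integral[OF V] by simp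
  then have "1 + N * (LINT x:{0..L}|lebesgue. V x) > 0"
    using \<open>0 \<le> N\<close> by (simp add: add_pos_nonneg)
  moreover have "(LINT x:{0..L}|lebesgue. U x - k * V x)
      = (LINT x:{0..L}|lebesgue. U x) - k * (LINT x:{0..L}|lebesgue. V x)"
    using bvp_solution_continuous[OF U] bvp_solution_continuous[OF V]
    unfolding bvp_solution_set_integral[OF Y] bvp_solution_set_integral[OF U] bvp_solution_set_integral[OF V]
    by (simp add: integral_diff integrable_continuous_interval integrable_on_mult_right)
  ultimately have "k = N * (LINT x:{0..L}|lebesgue. U x - k * V x)"
    unfolding k_def by (simp add: field_simps)
  then show ?thesis by (intro bvp_solution_nonlocal[OF Y]) simp
qed

section \<open>The Green function\<close>

lemma sinh_ptolemy: "sinh w * sinh (u - v) = sinh u * sinh (w - v) - sinh v * sinh (w - u)"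
  for u v w :: real
  unfolding sinh_diff by (simp add: algebra_simps)

lemma green_function_eq:
  fixes L M x s :: real
  assumes "L > 0" and "M > 0"
  defines "a \<equiv> sqrt M"
  defines "\<Phi> \<equiv> lin_sinh_cosh a 0 (- 1 / M) (1 / (M * a)) 0"
    and "\<Phi>'' \<equiv> lin_sinh_cosh a 0 0 (a / M) 0"
  shows "G L M x s = (if x \<le> s then 0 else \<Phi> (x - s))
    + x / L * (\<Phi>'' (L - s) / M - \<Phi> (L - s)) - sinh (a * x) / (M * sinh (a * L)) * \<Phi>'' (L - s)"
proof -
  define S where "S = sinh (a * L)"
  have "a > 0" and M: "M = a * a" using \<open>M > 0\<close> unfolding a_def by auto
  then have "S > 0" using \<open>L > 0\<close> unfolding S_def by simp
  have H: "x / L * (\<Phi>'' (L - s) / M - \<Phi> (L - s)) - sinh (a * x) / (M * S) * \<Phi>'' (L - s)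
      = x * (L - s) / (M * L) - sinh (a * x) * sinh (a * (L - s)) / (M * a * S)"
    unfolding \<Phi>_def \<Phi>''_def lin_sinh_cosh_def M using \<open>a > 0\<close> \<open>S > 0\<close> \<open>L > 0\<close>
    by (simp add: field_simps)
  have G_eq: "G L M x s = (if x \<le> s
      then x * (L - s) / (M * L) - sinh (a * x) * sinh (a * (L - s)) / (M * a * S)
      else s * (L - x) / (M * L) - sinh (a * s) * sinh (a * (L - x)) / (M * a * S))"
    unfolding G_def S_def a_def by simp
  show ?thesis
  proof (cases "x \<le> s")
    case True
    then show ?thesis using H unfolding G_eq S_def by simp
  next
    case False
    have "S * sinh (a * (x - s)) = sinh (a * x) * sinh (a * (L - s)) - sinh (a * s) * sinh (a * (L - x))"
      using sinh_ptolemy[of "a * L" "a * x" "a * s"] unfolding S_def by (simp add: right_diff_distrib)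
    then have ptolemy: "sinh (a * (x - s)) =
        (sinh (a * x) * sinh (a * (L - s)) - sinh (a * s) * sinh (a * (L - x))) / S"
      using \<open>S > 0\<close> by (simp add: field_simps)
    have "sinh (a * (x - s)) / (M * a) - sinh (a * x) * sinh (a * (L - s)) / (M * a * S)
        = - (sinh (a * s) * sinh (a * (L - x)) / (M * a * S))"
      unfolding ptolemy using \<open>S > 0\<close> \<open>a > 0\<close> \<open>M > 0\<close> by (simp add: field_simps)
    moreover have "(s - x) / M + x * (L - s) / (M * L) = s * (L - x) / (M * L)"
      using \<open>M > 0\<close> \<open>L > 0\<close> by (simp add: field_simps)
    moreover have "\<Phi> (x - s) = (s - x) / M + sinh (a * (x - s)) / (M * a)"
      unfolding \<Phi>_def lin_sinh_cosh_def using \<open>M > 0\<close> by (simp add: field_simps)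
    ultimately show ?thesis using H False unfolding G_eq S_def by simp
  qed
qed

lemma green_potential_eq:
  fixes p :: "real \<Rightarrow> real"
  assumes "L > 0" and "M > 0" and p: "p absolutely_integrable_on {0..L}" and x: "x \<in> {0..L}"
  defines "a \<equiv> sqrt M"
  defines "\<Phi> \<equiv> lin_sinh_cosh a 0 (- 1 / M) (1 / (M * a)) 0"
    and "\<Phi>'' \<equiv> lin_sinh_cosh a 0 0 (a / M) 0"
  defines "\<beta> \<equiv> (causal_conv \<Phi>'' p L / M - causal_conv \<Phi> p L) / L"
    and "\<gamma> \<equiv> - causal_conv \<Phi>'' p L / (M * sinh (a * L))"
  shows "(LINT s:{0..L}|lebesgue. G L M x s * p s) = causal_conv \<Phi> p x + lin_sinh_cosh a 0 \<beta> \<gamma> 0 x"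
proof -
  define c1 where "c1 = x / L"
  define c2 where "c2 = sinh (a * x) / (M * sinh (a * L))"
  have "\<Phi> 0 = 0" unfolding \<Phi>_def lin_sinh_cosh_def by simp
  then have G: "G L M x s = \<Phi> (max (x - s) 0) + (c1 / M - c2) * \<Phi>'' (L - s) - c1 * \<Phi> (L - s)" for s
    using green_function_eq[OF \<open>L > 0\<close> \<open>M > 0\<close>, of x s]
    unfolding c1_def c2_def a_def[symmetric] \<Phi>_def[symmetric] \<Phi>''_def[symmetric]
    by (simp add: max_def algebra_simps diff_divide_distrib)
  have int: "(\<lambda>s. f s * p s) integrable_on {c..d}" if "continuous_on {c..d} f" "{c..d} \<subseteq> {0..L}" for f c d
    using integrable_continuous_mult[OF that(1) absolutely_integrable_on_subinterval[OF p that(2)]] .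
  have int_max: "(\<lambda>s. \<Phi> (max (x - s) 0) * p s) integrable_on {0..L}"
    unfolding \<Phi>_def by (intro int continuous_intros) auto
  have int_L: "(\<lambda>s. \<Phi>'' (L - s) * p s) integrable_on {0..L}" "(\<lambda>s. \<Phi> (L - s) * p s) integrable_on {0..L}"
    unfolding \<Phi>_def \<Phi>''_def by (intro int continuous_intros; simp)+
  have "continuous_on {0..L} (\<lambda>s. G L M x s)"
    unfolding G \<Phi>_def \<Phi>''_def by (intro continuous_intros)
  then have "(LINT s:{0..L}|lebesgue. G L M x s * p s) = integral {0..L} (\<lambda>s. G L M x s * p s)"
    by (intro set_lebesgue_integral_eq_integral(2) absolutely_integrable_continuous_mult p)
  also have "\<dots> = integral {0..L} (\<lambda>s. \<Phi> (max (x - s) 0) * p s)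
      + (c1 / M - c2) * integral {0..L} (\<lambda>s. \<Phi>'' (L - s) * p s) - c1 * integral {0..L} (\<lambda>s. \<Phi> (L - s) * p s)"
  proof -
    have "(\<lambda>s. G L M x s * p s) = (\<lambda>s. \<Phi> (max (x - s) 0) * p s
        + (c1 / M - c2) * (\<Phi>'' (L - s) * p s) - c1 * (\<Phi> (L - s) * p s))"
      unfolding G by (simp add: fun_eq_iff algebra_simps)
    then show ?thesis
      using int_max int_L by (simp add: integral_add integral_diff integrable_add integrable_diff integrable_on_mult_right)
  qed
  also have "integral {0..L} (\<lambda>s. \<Phi> (max (x - s) 0) * p s) = causal_conv \<Phi> p x"
  proof -
    have "integral {0..L} (\<lambda>s. \<Phi> (max (x - s) 0) * p s)
        = integral {0..x} (\<lambda>s. \<Phi> (max (x - s) 0) * p s) + integral {x..L} (\<lambda>s. \<Phi> (max (x - s) 0) * p s)"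
      using x int_max by (intro Henstock_Kurzweil_Integration.integral_combine[symmetric]) auto
    also have "integral {x..L} (\<lambda>s. \<Phi> (max (x - s) 0) * p s) = integral {x..L} (\<lambda>s. 0)"
      using \<open>\<Phi> 0 = 0\<close> by (intro integral_cong) (simp add: max_def)
    also have "integral {0..x} (\<lambda>s. \<Phi> (max (x - s) 0) * p s) = causal_conv \<Phi> p x"
      unfolding causal_conv_def by (intro integral_cong) simp
    finally show ?thesis by simp
  qed
  finally show ?thesis
    unfolding causal_conv_def[symmetric] c1_def c2_def \<beta>_def \<gamma>_def lin_sinh_cosh_def
    by (simp add: algebra_simps diff_divide_distrib)
qed

lemma bvp_solution_fundamental_form:
  fixes p :: "real \<Rightarrow> real"
  assumes "L > 0" and "M > 0" and p: "p absolutely_integrable_on {0..L}"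
  defines "a \<equiv> sqrt M"
  defines "\<Phi> \<equiv> lin_sinh_cosh a 0 (- 1 / M) (1 / (M * a)) 0"
    and "\<Phi>'' \<equiv> lin_sinh_cosh a 0 0 (a / M) 0"
  defines "\<beta> \<equiv> (causal_conv \<Phi>'' p L / M - causal_conv \<Phi> p L) / L"
    and "\<gamma> \<equiv> - causal_conv \<Phi>'' p L / (M * sinh (a * L))"
  shows "bvp_solution L M 0 p (\<lambda>x. causal_conv \<Phi> p x + lin_sinh_cosh a 0 \<beta> \<gamma> 0 x)"
proof -
  have "a > 0" and aa: "a * a = M" using \<open>M > 0\<close> unfolding a_def by auto
  have "sinh (a * L) > 0" using \<open>a > 0\<close> \<open>L > 0\<close> by simp
  define \<Phi>' where "\<Phi>' = lin_sinh_cosh a (- 1 / M) 0 0 (1 / M)"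
  define \<Phi>''' where "\<Phi>''' = lin_sinh_cosh a 0 0 0 1"
  define U where "U x = causal_conv \<Phi> p x + lin_sinh_cosh a 0 \<beta> \<gamma> 0 x" for x
  define U1 where "U1 x = causal_conv \<Phi>' p x + lin_sinh_cosh a \<beta> 0 0 (a * \<gamma>) x" for x
  define U2 where "U2 x = causal_conv \<Phi>'' p x + lin_sinh_cosh a 0 0 (M * \<gamma>) 0 x" for x
  define U3 where "U3 x = causal_conv \<Phi>''' p x + lin_sinh_cosh a 0 0 0 (a * M * \<gamma>) x" for x
  have coeffs: "a * (1 / (M * a)) = 1 / M" "a * (a * \<gamma>) = M * \<gamma>" "a * (a * M * \<gamma>) = M * (M * \<gamma>)"
    using \<open>a > 0\<close> aa by (simp_all add: mult.assoc[symmetric])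
  have d1: "\<forall>x\<in>{0..L}. (U has_real_derivative U1 x) (at x within {0..L})"
    unfolding U_def[abs_def] U1_def \<Phi>_def \<Phi>'_def
    using \<open>a > 0\<close>
    by (intro ballI DERIV_cong[OF causal_conv_add_lin_sinh_cosh_derivative[OF p]]) (simp_all add: coeffs)
  have d2: "\<forall>x\<in>{0..L}. (U1 has_real_derivative U2 x) (at x within {0..L})"
    unfolding U1_def[abs_def] U2_def \<Phi>'_def \<Phi>''_def
    using \<open>a > 0\<close>
    by (intro ballI DERIV_cong[OF causal_conv_add_lin_sinh_cosh_derivative[OF p]]) (simp_all add: coeffs)
  have d3: "\<forall>x\<in>{0..L}. (U2 has_real_derivative U3 x) (at x within {0..L})"
    unfolding U2_def[abs_def] U3_def \<Phi>''_def \<Phi>'''_def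
    using \<open>a > 0\<close> \<open>M > 0\<close>
    by (intro ballI DERIV_cong[OF causal_conv_add_lin_sinh_cosh_derivative[OF p]])
      (simp_all add: aa mult.assoc)
  have ac: "abs_cont_on {0..L} U3"
    unfolding U3_def[abs_def] \<Phi>'''_def
    by (intro abs_cont_on_add abs_cont_on_causal_conv[OF p] abs_cont_on_lin_sinh_cosh)
  have bc: "U 0 = 0" "U L = 0" "U2 0 = 0" "U2 L = 0"
    unfolding U_def U2_def lin_sinh_cosh_def \<beta>_def \<gamma>_def
    using \<open>L > 0\<close> \<open>M > 0\<close> \<open>a > 0\<close> \<open>sinh (a * L) > 0\<close> by simp_all
  have conv4: "causal_conv (lin_sinh_cosh a 0 0 (a * 1) (a * 0)) p x = M * causal_conv \<Phi>'' p x" for x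
    using causal_conv_lin_sinh_cosh_scale[of a M 0 0 "a / M" 0 p x] \<open>M > 0\<close> unfolding \<Phi>''_def by simp
  have hom4: "lin_sinh_cosh a 0 0 (a * (a * M * \<gamma>)) (a * 0) x = M * lin_sinh_cosh a 0 0 (M * \<gamma>) 0 x" for x
    unfolding coeffs lin_sinh_cosh_def by simp
  have "AE x in lebesgue. x \<in> {0<..<L} \<longrightarrow> (\<exists>y4. (U3 has_real_derivative y4) (at x) \<and>
      y4 - M * U2 x + 0 * (LINT t:{0..L}|lebesgue. U t) = p x)"
    using causal_conv_ae_derivative[OF p, of a 0 0 0 1]
  proof eventually_elim
    case (elim x)
    show ?case
    proof
      assume x: "x \<in> {0<..<L}"
      have "(U3 has_real_derivative causal_conv (lin_sinh_cosh a 0 0 (a * 1) (a * 0)) p x + (0 + 1) * p x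
          + lin_sinh_cosh a 0 0 (a * (a * M * \<gamma>)) (a * 0) x) (at x)"
        unfolding U3_def[abs_def] \<Phi>'''_def using elim x
        by (intro DERIV_add lin_sinh_cosh_has_real_derivative) auto
      then show "\<exists>y4. (U3 has_real_derivative y4) (at x) \<and>
          y4 - M * U2 x + 0 * (LINT t:{0..L}|lebesgue. U t) = p x"
        unfolding conv4 hom4 U2_def by (auto simp: algebra_simps)
    qed
  qed
  from bvp_solutionI[OF d1 d2 d3 ac this bc] show ?thesis unfolding U_def[abs_def] .
qed

lemma bvp_solution_green_potential:
  fixes p :: "real \<Rightarrow> real"
  assumes "L > 0" and "M > 0" and "p absolutely_integrable_on {0..L}"
  shows "bvp_solution L M 0 p (\<lambda>x. LINT s:{0..L}|lebesgue. G L M x s * p s)"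
  using bvp_solution_fundamental_form[OF assms] less_imp_le[OF \<open>L > 0\<close>]
  by (rule bvp_solution_cong) (simp add: green_potential_eq[OF assms])

theorem corollary2p1:
  fixes L M N :: real and p :: "real \<Rightarrow> real"
  assumes "L > 0" and "M > 0" and "N > 0"
    and "set_integrable lebesgue {0..L} p"
  shows "let Y = (\<lambda>x. (LINT s:{0..L}|lebesgue. G L M x s * p s)
            - N * (LINT s:{0..L}|lebesgue. G L M x s)
              / (1 + N * (LINT x':{0..L}|lebesgue. LINT s:{0..L}|lebesgue. G L M x' s))
              * (LINT x':{0..L}|lebesgue. LINT s:{0..L}|lebesgue. G L M x' s * p s))
         in bvp_solution L M N p Y \<and>
            (\<forall>y. bvp_solution L M N p y \<longrightarrow> (\<forall>x\<in>{0..L}. y x = Y x))"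
proof -
  define U where "U = (\<lambda>x. LINT s:{0..L}|lebesgue. G L M x s * p s)"
  define V where "V = (\<lambda>x. LINT s:{0..L}|lebesgue. G L M x s)"
  define k where "k = N * (LINT x:{0..L}|lebesgue. U x) / (1 + N * (LINT x:{0..L}|lebesgue. V x))"
  have "bvp_solution L M 0 p U"
    unfolding U_def using assms by (intro bvp_solution_green_potential)
  moreover have "bvp_solution L M 0 (\<lambda>_. 1) V"
    using bvp_solution_green_potential[OF \<open>L > 0\<close> \<open>M > 0\<close>, of "\<lambda>_. 1"] unfolding V_def by simp
  ultimately have sol: "bvp_solution L M N p (\<lambda>x. U x - k * V x)"
    unfolding k_def using assms by (intro bvp_solution_nonlocal_combination) auto
  have "\<forall>y. bvp_solution L M N p y \<longrightarrow> (\<forall>x\<in>{0..L}. y x = U x - k * V x)"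
    using sol \<open>L > 0\<close> \<open>M > 0\<close> \<open>N > 0\<close> by (auto intro: bvp_solution_unique)
  moreover have formula: "(LINT s:{0..L}|lebesgue. G L M x s * p s)
      - N * (LINT s:{0..L}|lebesgue. G L M x s)
        / (1 + N * (LINT x':{0..L}|lebesgue. LINT s:{0..L}|lebesgue. G L M x' s))
        * (LINT x':{0..L}|lebesgue. LINT s:{0..L}|lebesgue. G L M x' s * p s) = U x - k * V x" for x
    unfolding k_def U_def V_def by (simp add: ac_simps)
  ultimately show ?thesis using sol unfolding Let_def formula by blast
qed

end
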